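(* Let $n\in\mathbb{N}$ and $\hbar\in\mathbb{R}\setminus(\{0\}\cup\{1/k:k\in\mathbb{N}\})$. Then the map $\Psi_\hbar:\bigoplus_k\mathscr{P}^{k,k}(\mathbb{C}^{1+n})\to\mathscr{P}(\mathbb{CP}^n)$ is surjective, its kernel is exactly the $^*$-ideal $\langle\mathcal{J}-1\rangle$ of $(\bigoplus_k\mathscr{P}^{k,k}(\mathbb{C}^{1+n}),\star_\hbar)$ generated by $\mathcal{J}-\mathbb{1}$, and $\Psi_\hbar(\overline{f})([w])=\overline{\Psi_\hbar(f)([w])}$ for all $f$ and all $[w]\in\mathbb{CP}^n$.
   Context: $\mathscr{P}^{k,k}(\mathbb{C}^{1+n})$ is the span of $z^K\overline{z}^L$ with $|K|=|L|=k$. Wick product: $f\star_\hbar g=\sum_K\frac{\hbar^{|K|}}{K!}\frac{\partial^{|K|}f}{\partial\overline{z}^K}\frac{\partial^{|K|}g}{\partial z^K}$, involution complex conjugation. $\mathcal{J}=\sum_jz_j\overline{z_j}$. For $f\in\bigoplus_k\mathscr{P}^{k,k}$, $\Psi_0(f):\mathbb{CP}^n\to\mathbb{C}$, $[w]\mapsto f(w)$ for any representative $w$ with $\mathcal{J}(w)=1$; $\mathscr{P}(\mathbb{CP}^n)$ is the image of $\Psi_0$. For $\hbar\ne0$, $\Psi_\hbar(f)=\sum_k\hbar^k(1/\hbar)_{\downarrow,k}\Psi_0(f_k)$ where $f_k\in\mathscr{P}^{k,k}$ are the homogeneous components of $f$ and $(x)_{\downarrow,k}=\prod_{j=0}^{k-1}(x-j)$.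 *)

theory Defs
  imports "HOL-Analysis.Analysis" "HOL-Library.Poly_Mapping"
begin

text \<open>Polynomials in z_0..z_n and their conjugates, represented by coefficients.
A monomial z^K zbar^L is encoded by the pair of exponent vectors (K, L),
exponent vectors being functions nat => nat (index i for variable z_i).\<close>

type_synonym mono = "(nat \<Rightarrow> nat) \<times> (nat \<Rightarrow> nat)"
type_synonym cpoly = "mono \<Rightarrow>\<^sub>0 complex"

definition msize :: "nat \<Rightarrow> (nat \<Rightarrow> nat) \<Rightarrow> nat" where
  "msize n K = (\<Sum>i\<le>n. K i)"

definition mfact :: "nat \<Rightarrow> (nat \<Rightarrow> nat) \<Rightarrow> nat" where
  "mfact n K = (\<Prod>i\<le>n. fact (K i))"

definition midx :: "nat \<Rightarrow> (nat \<Rightarrow> nat) set" where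
  "midx n = {K. \<forall>i>n. K i = 0}"

text \<open>The space of bihomogeneous sums, i.e. the direct sum over k of P^{k,k}(C^{1+n}).\<close>
definition Pkk :: "nat \<Rightarrow> cpoly set" where
  "Pkk n = {f. \<forall>(K, L) \<in> Poly_Mapping.keys f. K \<in> midx n \<and> L \<in> midx n \<and> msize n K = msize n L}"

definition smul :: "complex \<Rightarrow> cpoly \<Rightarrow> cpoly" where
  "smul c f = Poly_Mapping.map ((*) c) f"

text \<open>d^M/dzbar^M zbar^L = (prod_i L_i!/(L_i-M_i)!) zbar^(L-M) for M <= L.\<close>
definition dfact :: "nat \<Rightarrow> (nat \<Rightarrow> nat) \<Rightarrow> (nat \<Rightarrow> nat) \<Rightarrow> complex" where
  "dfact n L M = (\<Prod>i\<le>n. of_nat (fact (L i)) / of_nat (fact (L i - M i)))"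

definition wick_mono :: "nat \<Rightarrow> real \<Rightarrow> complex \<Rightarrow> mono \<Rightarrow> mono \<Rightarrow> cpoly" where
  "wick_mono n h c a b =
     (case a of (K1, L1) \<Rightarrow> case b of (K2, L2) \<Rightarrow>
       (\<Sum>M \<in> {M \<in> midx n. (\<forall>i. M i \<le> L1 i) \<and> (\<forall>i. M i \<le> K2 i)}.
          Poly_Mapping.single (\<lambda>i. K1 i + K2 i - M i, \<lambda>i. L1 i - M i + L2 i)
            (c * complex_of_real (h ^ msize n M) / of_nat (mfact n M)
               * dfact n L1 M * dfact n K2 M)))"

text \<open>Wick star product f *_h g = sum_K h^|K|/K! (d^K f/dzbar^K)(d^K g/dz^K), extended bilinearly.\<close>
definition wick :: "nat \<Rightarrow> real \<Rightarrow> cpoly \<Rightarrow> cpoly \<Rightarrow> cpoly" where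
  "wick n h f g = (\<Sum>a\<in>Poly_Mapping.keys f. \<Sum>b\<in>Poly_Mapping.keys g.
                      wick_mono n h (Poly_Mapping.lookup f a * Poly_Mapping.lookup g b) a b)"

text \<open>Complex conjugation of the polynomial function: conj(c z^K zbar^L) = conj(c) z^L zbar^K.\<close>
definition pconj :: "cpoly \<Rightarrow> cpoly" where
  "pconj f = (\<Sum>(K, L)\<in>Poly_Mapping.keys f.
                 Poly_Mapping.single (L, K) (cnj (Poly_Mapping.lookup f (K, L))))"

definition eval :: "nat \<Rightarrow> cpoly \<Rightarrow> (nat \<Rightarrow> complex) \<Rightarrow> complex" where
  "eval n f w = (\<Sum>(K, L)\<in>Poly_Mapping.keys f.
                   Poly_Mapping.lookup f (K, L) * (\<Prod>i\<le>n. w i ^ K i * cnj (w i) ^ L i))"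

definition Jpoly :: "nat \<Rightarrow> cpoly" where
  "Jpoly n = (\<Sum>j\<le>n. Poly_Mapping.single ((\<lambda>i. if i = j then 1 else 0), (\<lambda>i. if i = j then 1 else 0)) 1)"

definition onep :: cpoly where
  "onep = Poly_Mapping.single ((\<lambda>_. 0), (\<lambda>_. 0)) 1"

definition Jval :: "nat \<Rightarrow> (nat \<Rightarrow> complex) \<Rightarrow> real" where
  "Jval n w = (\<Sum>j\<le>n. (cmod (w j))\<^sup>2)"

text \<open>C^{1+n} and CP^n (points = complex lines through 0 minus the origin).\<close>
definition Cvec :: "nat \<Rightarrow> (nat \<Rightarrow> complex) set" where
  "Cvec n = {w. \<forall>i>n. w i = 0}"

definition cline :: "(nat \<Rightarrow> complex) \<Rightarrow> (nat \<Rightarrow> complex) set" where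
  "cline w = {(\<lambda>i. c * w i) | c. c \<noteq> 0}"

definition CP :: "nat \<Rightarrow> (nat \<Rightarrow> complex) set set" where
  "CP n = {cline w | w. w \<in> Cvec n \<and> w \<noteq> (\<lambda>_. 0)}"

definition hcomp :: "nat \<Rightarrow> nat \<Rightarrow> cpoly \<Rightarrow> cpoly" where
  "hcomp n k f = (\<Sum>(K, L)\<in>{(K, L) \<in> Poly_Mapping.keys f. msize n K = k}.
                    Poly_Mapping.single (K, L) (Poly_Mapping.lookup f (K, L)))"

definition Psi0 :: "nat \<Rightarrow> cpoly \<Rightarrow> (nat \<Rightarrow> complex) set \<Rightarrow> complex" where
  "Psi0 n f p = (if p \<in> CP n then eval n f (SOME w. w \<in> p \<and> Jval n w = 1) else 0)"

definition ffact :: "real \<Rightarrow> nat \<Rightarrow> real" where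
  "ffact x k = (\<Prod>j<k. x - real j)"

definition Psi :: "nat \<Rightarrow> real \<Rightarrow> cpoly \<Rightarrow> (nat \<Rightarrow> complex) set \<Rightarrow> complex" where
  "Psi n h f p = (\<Sum>k\<in>(\<lambda>(K, L). msize n K) ` Poly_Mapping.keys f.
                    complex_of_real (h ^ k * ffact (1 / h) k) * Psi0 n (hcomp n k f) p)"

definition star_ideal :: "nat \<Rightarrow> real \<Rightarrow> cpoly set \<Rightarrow> bool" where
  "star_ideal n h I \<longleftrightarrow> I \<subseteq> Pkk n \<and> 0 \<in> I
     \<and> (\<forall>x\<in>I. \<forall>y\<in>I. x + y \<in> I)
     \<and> (\<forall>c. \<forall>x\<in>I. smul c x \<in> I)
     \<and> (\<forall>a\<in>Pkk n. \<forall>x\<in>I. wick n h a x \<in> I \<and> wick n h x a \<in> I)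
     \<and> (\<forall>x\<in>I. pconj x \<in> I)"

definition gen_star_ideal :: "nat \<Rightarrow> real \<Rightarrow> cpoly set \<Rightarrow> cpoly set" where
  "gen_star_ideal n h S = \<Inter>{I. star_ideal n h I \<and> S \<subseteq> I}"

end

theory Submission
  imports Defs
begin

text \<open>On the sphere J = 1, Psi_h is Psi_0 composed with the rescaling
  z^K zbar^L |-> rho(|K|) z^K zbar^L, where rho(k) = h^k (1/h)_k = prod_(j<k) (1 - j h) is nonzero
  because h is not of the form 1/k. This gives surjectivity, and conjugation commutes with Psi_h
  because |K| = |L|.

  Right Wick multiplication by J - 1 sends c z^K zbar^L to c z^K zbar^L J + (h |L| - 1) c z^K zbar^L,
  which Psi_h kills since rho(k + 1) = (1 - k h) rho(k). Conversely, the same formula lets one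
  divide any f by J - 1 degree by degree, leaving a bihomogeneous remainder of top degree; if
  Psi_h f = 0, this remainder vanishes on the sphere, hence everywhere by homogeneity, hence is zero.
  So the kernel is the right ideal of multiples of J - 1. It is two-sided because
  a * (b * (J - 1)) = (a * b) * (J - 1), and closed under conjugation because conjugation reverses
  Wick products; and every *-ideal containing J - 1 contains these multiples.\<close>

section \<open>Bilinearity of the Wick product\<close>

definition lin_ext :: "('a \<Rightarrow> 'b::zero \<Rightarrow> 'c::comm_monoid_add) \<Rightarrow> ('a \<Rightarrow>\<^sub>0 'b) \<Rightarrow> 'c" where
  "lin_ext F f = (\<Sum>x\<in>Poly_Mapping.keys f. F x (Poly_Mapping.lookup f x))"

lemma lin_ext_superset:
  assumes "finite S" "Poly_Mapping.keys f \<subseteq> S" "\<And>x. F x 0 = 0"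
  shows "lin_ext F f = (\<Sum>x\<in>S. F x (Poly_Mapping.lookup f x))"
  unfolding lin_ext_def
  by (rule sum.mono_neutral_left) (use assms in \<open>auto simp: in_keys_iff\<close>)

lemma lin_ext_zero [simp]: "lin_ext F 0 = 0"
  by (simp add: lin_ext_def)

lemma lin_ext_single:
  assumes "F x 0 = 0"
  shows "lin_ext F (Poly_Mapping.single x c) = F x c"
  using assms by (cases "c = 0") (auto simp: lin_ext_def)

lemma lin_ext_add:
  fixes F :: "'a \<Rightarrow> 'b::monoid_add \<Rightarrow> 'c::comm_monoid_add"
  assumes "\<And>x a b. F x (a + b) = F x a + F x b" "\<And>x. F x 0 = 0"
  shows "lin_ext F (f + g) = lin_ext F f + lin_ext F g"
  using setsum_keys_plus_distrib[of F f g] assms unfolding lin_ext_def by (simp add: lookup_add)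

lemma lin_ext_sum:
  fixes F :: "'a \<Rightarrow> 'b::comm_monoid_add \<Rightarrow> 'c::comm_monoid_add"
  assumes "\<And>x a b. F x (a + b) = F x a + F x b" "\<And>x. F x 0 = 0"
  shows "lin_ext F (\<Sum>i\<in>I. g i) = (\<Sum>i\<in>I. lin_ext F (g i))"
  by (induction I rule: infinite_finite_induct) (simp_all add: lin_ext_add[OF assms])

lemma lin_ext_diff:
  fixes F :: "'a \<Rightarrow> 'b::ab_group_add \<Rightarrow> 'c::ab_group_add"
  assumes "\<And>x a b. F x (a + b) = F x a + F x b" "\<And>x. F x 0 = 0"
  shows "lin_ext F (f - g) = lin_ext F f - lin_ext F g"
  using lin_ext_add[where F = F and f = "f - g" and g = g] assms by simp

lemma lin_ext_cong:
  assumes "\<And>x. x \<in> Poly_Mapping.keys f \<Longrightarrow> F x (Poly_Mapping.lookup f x) = G x (Poly_Mapping.lookup f x)"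
  shows "lin_ext F f = lin_ext G f"
  using assms unfolding lin_ext_def by (rule sum.cong[OF refl])

lemma lin_ext_add_fun: "lin_ext (\<lambda>x c. F x c + G x c) f = lin_ext F f + lin_ext G f"
  by (simp add: lin_ext_def sum.distrib)

lemma lin_ext_diff_fun:
  fixes F :: "'a \<Rightarrow> 'b::zero \<Rightarrow> 'c::ab_group_add"
  shows "lin_ext (\<lambda>x c. F x c - G x c) f = lin_ext F f - lin_ext G f"
  by (simp add: lin_ext_def sum_subtractf)

lemma lin_ext_sum_fun: "lin_ext (\<lambda>x c. \<Sum>i\<in>I. F i x c) f = (\<Sum>i\<in>I. lin_ext (F i) f)"
  unfolding lin_ext_def by (rule sum.swap)

lemma lin_ext_single_self: "lin_ext Poly_Mapping.single f = f"
  by (rule poly_mapping_eqI)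
     (auto simp: lin_ext_def lookup_sum lookup_single when_def in_keys_iff
           intro: sum.neutral trans[OF sum.delta'])

lemma single_sum: "Poly_Mapping.single x (\<Sum>i\<in>I. v i) = (\<Sum>i\<in>I. Poly_Mapping.single x (v i))"
  by (induction I rule: infinite_finite_induct) (auto simp: single_add)

lemma wick_mono_add: "wick_mono n h (c + d) a b = wick_mono n h c a b + wick_mono n h d a b"
  unfolding wick_mono_def
  by (cases a; cases b) (simp add: sum.distrib[symmetric] single_add[symmetric] distrib_right add_divide_distrib)

lemma wick_mono_zero [simp]: "wick_mono n h 0 a b = 0"
  unfolding wick_mono_def by (cases a; cases b) simp

lemma wick_eq_lin_ext: "wick n h f g = lin_ext (\<lambda>a c. lin_ext (\<lambda>b d. wick_mono n h (c * d) a b) g) f"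
  unfolding wick_def lin_ext_def ..

lemma wick_zero_left [simp]: "wick n h 0 g = 0"
  by (simp add: wick_def)

lemma wick_zero_right [simp]: "wick n h f 0 = 0"
  by (simp add: wick_def)

lemma wick_add_left: "wick n h (f1 + f2) g = wick n h f1 g + wick n h f2 g"
  unfolding wick_eq_lin_ext
  by (rule lin_ext_add) (simp_all add: distrib_right wick_mono_add lin_ext_add_fun lin_ext_def)

lemma wick_add_right: "wick n h f (g1 + g2) = wick n h f g1 + wick n h f g2"
  unfolding wick_eq_lin_ext
  by (subst lin_ext_add) (simp_all add: distrib_left wick_mono_add lin_ext_add_fun[symmetric])

lemma wick_sum_left: "wick n h (\<Sum>i\<in>I. f i) g = (\<Sum>i\<in>I. wick n h (f i) g)"
  by (induction I rule: infinite_finite_induct) (simp_all add: wick_add_left)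

lemma wick_sum_right: "wick n h f (\<Sum>i\<in>I. g i) = (\<Sum>i\<in>I. wick n h f (g i))"
  by (induction I rule: infinite_finite_induct) (simp_all add: wick_add_right)

lemma wick_diff_right: "wick n h f (g1 - g2) = wick n h f g1 - wick n h f g2"
  by (metis add_diff_cancel eq_diff_eq wick_add_right)

lemma wick_single_right:
  "wick n h f (Poly_Mapping.single y e) = lin_ext (\<lambda>a c. wick_mono n h (c * e) a y) f"
  unfolding wick_eq_lin_ext by (rule lin_ext_cong) (simp add: lin_ext_single)

lemma wick_single_single:
  "wick n h (Poly_Mapping.single x c) (Poly_Mapping.single y d) = wick_mono n h (c * d) x y"
  by (simp add: wick_single_right lin_ext_single)

section \<open>Right Wick multiplication by J - 1\<close>

definition unit_idx :: "nat \<Rightarrow> nat \<Rightarrow> nat" where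
  "unit_idx j = (\<lambda>i. if i = j then 1 else 0)"

definition mul_zz :: "nat \<Rightarrow> mono \<Rightarrow> mono" where
  "mul_zz j x = ((\<lambda>i. fst x i + unit_idx j i), (\<lambda>i. snd x i + unit_idx j i))"

text \<open>This is (c z^K zbar^L) * (J - 1): only the derivative orders 0 and e_j contribute.\<close>
definition right_Jm1 :: "nat \<Rightarrow> real \<Rightarrow> mono \<Rightarrow> complex \<Rightarrow> cpoly" where
  "right_Jm1 n h x c = (\<Sum>j\<le>n. Poly_Mapping.single (mul_zz j x) c)
      + Poly_Mapping.single x (c * (complex_of_real h * of_nat (msize n (snd x)) - 1))"

lemma zero_in_midx [simp]: "(\<lambda>_. 0) \<in> midx n"
  by (simp add: midx_def)

lemma msize_zero [simp]: "msize n (\<lambda>_. 0) = 0"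
  by (simp add: msize_def)

lemma mfact_zero [simp]: "mfact n (\<lambda>_. 0) = 1"
  by (simp add: mfact_def)

lemma dfact_zero [simp]: "dfact n L (\<lambda>_. 0) = 1"
  by (simp add: dfact_def)

lemma unit_idx_in_midx [simp]: "j \<le> n \<Longrightarrow> unit_idx j \<in> midx n"
  by (simp add: midx_def unit_idx_def)

lemma sum_unit_idx: "j \<le> n \<Longrightarrow> (\<Sum>i\<le>n. unit_idx j i) = 1"
  by (simp add: unit_idx_def)

lemma msize_unit_idx [simp]: "j \<le> n \<Longrightarrow> msize n (unit_idx j) = 1"
  by (simp add: msize_def sum_unit_idx)

lemma mfact_unit_idx [simp]: "mfact n (unit_idx j) = 1"
  unfolding mfact_def by (rule prod.neutral) (simp add: unit_idx_def)

lemma msize_add_unit_idx: "j \<le> n \<Longrightarrow> msize n (\<lambda>i. M i + unit_idx j i) = msize n M + 1"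
  by (simp add: msize_def sum.distrib sum_unit_idx)

lemma msize_mul_zz:
  assumes "j \<le> n"
  shows "msize n (fst (mul_zz j x)) = msize n (fst x) + 1"
    and "msize n (snd (mul_zz j x)) = msize n (snd x) + 1"
  using assms by (simp_all add: mul_zz_def msize_add_unit_idx)

lemma prod_if_eq_one: "j \<le> (n::nat) \<Longrightarrow> (\<Prod>i\<le>n. if i = j then a else 1) = (a::'a::comm_monoid_mult)"
  using prod.delta[OF finite_atMost[of n], of j "\<lambda>_. a"] by simp

lemma dfact_unit_idx:
  assumes "j \<le> n" "1 \<le> L j"
  shows "dfact n L (unit_idx j) = of_nat (L j)"
proof -
  have "dfact n L (unit_idx j) = (\<Prod>i\<le>n. if i = j then of_nat (fact (L j)) / of_nat (fact (L j - 1)) else 1)"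
    unfolding dfact_def by (rule prod.cong) (auto simp: unit_idx_def)
  also have "\<dots> = of_nat (fact (L j)) / of_nat (fact (L j - 1))"
    using assms(1) by (rule prod_if_eq_one)
  also have "\<dots> = of_nat (L j)"
    using assms(2) by (cases "L j") (simp_all add: field_simps)
  finally show ?thesis .
qed

lemma dfact_unit_idx_self: "j \<le> n \<Longrightarrow> dfact n (unit_idx j) (unit_idx j) = 1"
  by (subst dfact_unit_idx) (auto simp: unit_idx_def)

lemma wick_mono_one: "wick_mono n h c x ((\<lambda>_. 0), (\<lambda>_. 0)) = Poly_Mapping.single x c"
proof -
  obtain K L where x: "x = (K, L)" by force
  have "{M \<in> midx n. (\<forall>i. M i \<le> L i) \<and> (\<forall>i. M i \<le> (0::nat))} = {\<lambda>_. 0}"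
    by auto
  then show ?thesis by (simp add: wick_mono_def x)
qed

lemma le_unit_idx_iff: "(\<forall>i. M i \<le> unit_idx j i) \<longleftrightarrow> M = (\<lambda>_. 0) \<or> M = unit_idx j"
proof
  assume le: "\<forall>i. M i \<le> unit_idx j i"
  have "M i = 0" if "i \<noteq> j" for i
    using le[rule_format, of i] that by (simp add: unit_idx_def)
  moreover have "M j \<le> 1"
    using le[rule_format, of j] by (simp add: unit_idx_def)
  ultimately show "M = (\<lambda>_. 0) \<or> M = unit_idx j"
    by (cases "M j") (auto simp: unit_idx_def fun_eq_iff, metis)
qed (auto simp: unit_idx_def)

lemma wick_mono_zz:
  assumes "j \<le> n"
  shows "wick_mono n h c x (unit_idx j, unit_idx j) = Poly_Mapping.single (mul_zz j x) c
          + Poly_Mapping.single x (c * complex_of_real h * of_nat (snd x j))"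
proof -
  obtain K L where x: "x = (K, L)" by force
  have ne: "(\<lambda>_. 0::nat) \<noteq> unit_idx j" by (auto simp: unit_idx_def fun_eq_iff)
  show ?thesis
  proof (cases "1 \<le> L j")
    case True
    then have "{M \<in> midx n. (\<forall>i. M i \<le> L i) \<and> (\<forall>i. M i \<le> unit_idx j i)} = {\<lambda>_. 0, unit_idx j}"
      using assms by (auto simp: le_unit_idx_iff) (auto simp: unit_idx_def)
    moreover have "(\<lambda>i. K i + unit_idx j i - unit_idx j i, \<lambda>i. L i - unit_idx j i + unit_idx j i) = (K, L)"
      using True by (auto simp: unit_idx_def fun_eq_iff)
    ultimately show ?thesis
      using assms True ne by (simp add: wick_mono_def x dfact_unit_idx dfact_unit_idx_self mul_zz_def)
  next
    case False
    then have "{M \<in> midx n. (\<forall>i. M i \<le> L i) \<and> (\<forall>i. M i \<le> unit_idx j i)} = {\<lambda>_. 0}"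
      using assms by (auto simp: le_unit_idx_iff) (auto simp: unit_idx_def dest: spec[of _ j])
    then show ?thesis
      using False by (simp add: wick_mono_def x mul_zz_def not_less_eq_eq)
  qed
qed

lemma Jpoly_eq: "Jpoly n = (\<Sum>j\<le>n. Poly_Mapping.single (unit_idx j, unit_idx j) 1)"
  unfolding Jpoly_def unit_idx_def ..

lemma wick_Jm1: "wick n h g (Jpoly n - onep) = lin_ext (right_Jm1 n h) g"
proof -
  have "wick n h g (Jpoly n - onep)
     = lin_ext (\<lambda>a c. (\<Sum>j\<le>n. Poly_Mapping.single (mul_zz j a) c
          + Poly_Mapping.single a (c * complex_of_real h * of_nat (snd a j))) - Poly_Mapping.single a c) g"
    unfolding Jpoly_eq onep_def
    by (simp add: wick_diff_right wick_sum_right wick_single_right wick_mono_one wick_mono_zz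
        lin_ext_diff_fun lin_ext_sum_fun)
  also have "\<dots> = lin_ext (right_Jm1 n h) g"
  proof (rule lin_ext_cong)
    fix a
    let ?c = "Poly_Mapping.lookup g a"
    have "(\<Sum>j\<le>n. ?c * complex_of_real h * of_nat (snd a j)) - ?c
        = ?c * (complex_of_real h * of_nat (msize n (snd a)) - 1)"
      by (simp add: msize_def sum_distrib_left algebra_simps)
    then show "(\<Sum>j\<le>n. Poly_Mapping.single (mul_zz j a) ?c
          + Poly_Mapping.single a (?c * complex_of_real h * of_nat (snd a j))) - Poly_Mapping.single a ?c
        = right_Jm1 n h a ?c"
      by (simp add: right_Jm1_def sum.distrib flip: single_sum single_diff)
  qed
  finally show ?thesis .
qed

section \<open>Bihomogeneous polynomials and conjugation\<close>

definition balanced :: "nat \<Rightarrow> mono \<Rightarrow> bool" where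
  "balanced n x \<longleftrightarrow> fst x \<in> midx n \<and> snd x \<in> midx n \<and> msize n (fst x) = msize n (snd x)"

lemma Pkk_iff: "f \<in> Pkk n \<longleftrightarrow> (\<forall>x\<in>Poly_Mapping.keys f. balanced n x)"
  by (auto simp: Pkk_def balanced_def split_def)

lemma balanced_swap: "balanced n x \<Longrightarrow> balanced n (snd x, fst x)"
  by (auto simp: balanced_def)

lemma balanced_mul_zz: "j \<le> n \<Longrightarrow> balanced n x \<Longrightarrow> balanced n (mul_zz j x)"
  by (auto simp: balanced_def msize_mul_zz) (auto simp: mul_zz_def midx_def unit_idx_def)

lemma balanced_one: "balanced n ((\<lambda>_. 0), (\<lambda>_. 0))"
  by (simp add: balanced_def)

lemma balanced_wick_term:
  assumes a: "balanced n a" and b: "balanced n b"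
    and M: "M \<in> midx n" "\<forall>i. M i \<le> snd a i" "\<forall>i. M i \<le> fst b i"
  shows "balanced n ((\<lambda>i. fst a i + fst b i - M i), (\<lambda>i. snd a i - M i + snd b i))"
proof -
  have le: "M i \<le> fst b i" "M i \<le> snd a i" for i
    using M by auto
  have "msize n (\<lambda>i. fst a i + fst b i - M i) + msize n M = msize n (fst a) + msize n (fst b)"
    unfolding msize_def sum.distrib[symmetric] by (rule sum.cong) (simp_all add: le trans_le_add2)
  moreover have "msize n (\<lambda>i. snd a i - M i + snd b i) + msize n M = msize n (snd a) + msize n (snd b)"
    unfolding msize_def sum.distrib[symmetric] by (rule sum.cong) (simp_all add: le trans_le_add1)
  ultimately show ?thesis using a b M by (auto simp: balanced_def midx_def)
qed

lemma Pkk_zero [simp]: "0 \<in> Pkk n"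
  by (simp add: Pkk_iff)

lemma Pkk_add: "f \<in> Pkk n \<Longrightarrow> g \<in> Pkk n \<Longrightarrow> f + g \<in> Pkk n"
  using keys_add[of f g] by (auto simp: Pkk_iff)

lemma Pkk_diff: "f \<in> Pkk n \<Longrightarrow> g \<in> Pkk n \<Longrightarrow> f - g \<in> Pkk n"
  using keys_diff[of f g] by (auto simp: Pkk_iff)

lemma Pkk_sum: "(\<And>i. i \<in> I \<Longrightarrow> f i \<in> Pkk n) \<Longrightarrow> (\<Sum>i\<in>I. f i) \<in> Pkk n"
  using keys_sum[of f I] by (fastforce simp: Pkk_iff)

lemma Pkk_single: "balanced n x \<Longrightarrow> Poly_Mapping.single x c \<in> Pkk n"
  by (simp add: Pkk_iff)

lemma onep_in_Pkk: "onep \<in> Pkk n"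
  unfolding onep_def by (rule Pkk_single[OF balanced_one])

lemma Pkk_wick_mono: "balanced n a \<Longrightarrow> balanced n b \<Longrightarrow> wick_mono n h c a b \<in> Pkk n"
  unfolding wick_mono_def split_beta
  by (intro Pkk_sum Pkk_single balanced_wick_term) auto

lemma Pkk_wick: "f \<in> Pkk n \<Longrightarrow> g \<in> Pkk n \<Longrightarrow> wick n h f g \<in> Pkk n"
  unfolding wick_def by (intro Pkk_sum Pkk_wick_mono) (auto simp: Pkk_iff)

lemma Pkk_right_Jm1: "f \<in> Pkk n \<Longrightarrow> lin_ext (right_Jm1 n h) f \<in> Pkk n"
  unfolding lin_ext_def right_Jm1_def
  by (intro Pkk_sum Pkk_add Pkk_single balanced_mul_zz) (auto simp: Pkk_iff)

lemma pconj_eq_sum: "pconj f = (\<Sum>x\<in>Poly_Mapping.keys f. Poly_Mapping.single (snd x, fst x) (cnj (Poly_Mapping.lookup f x)))"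
  by (simp add: pconj_def split_def)

lemma pconj_eq_lin_ext: "pconj f = lin_ext (\<lambda>x c. Poly_Mapping.single (snd x, fst x) (cnj c)) f"
  by (simp add: pconj_eq_sum lin_ext_def)

lemma pconj_sum: "pconj (\<Sum>i\<in>I. f i) = (\<Sum>i\<in>I. pconj (f i))"
  unfolding pconj_eq_lin_ext by (rule lin_ext_sum) (simp_all add: single_add)

lemma pconj_single: "pconj (Poly_Mapping.single x c) = Poly_Mapping.single (snd x, fst x) (cnj c)"
  unfolding pconj_eq_lin_ext by (rule lin_ext_single) simp

lemma pconj_pconj: "pconj (pconj f) = f"
proof -
  have "pconj (pconj f) = lin_ext Poly_Mapping.single f"
    unfolding pconj_eq_sum[of f] pconj_sum pconj_single by (simp add: lin_ext_def)
  then show ?thesis by (simp add: lin_ext_single_self)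
qed

lemma Pkk_pconj: "f \<in> Pkk n \<Longrightarrow> pconj f \<in> Pkk n"
  unfolding pconj_eq_sum by (intro Pkk_sum Pkk_single balanced_swap) (auto simp: Pkk_iff)

lemma cnj_dfact [simp]: "cnj (dfact n L M) = dfact n L M"
  by (simp add: dfact_def)

lemma pconj_wick_mono: "pconj (wick_mono n h c a b) = wick_mono n h (cnj c) (snd b, fst b) (snd a, fst a)"
proof -
  obtain K1 L1 K2 L2 where ab: "a = (K1, L1)" "b = (K2, L2)" by force
  have S: "{M \<in> midx n. (\<forall>i. M i \<le> K2 i) \<and> (\<forall>i. M i \<le> L1 i)} = {M \<in> midx n. (\<forall>i. M i \<le> L1 i) \<and> (\<forall>i. M i \<le> K2 i)}"
    by blast
  show ?thesis
    unfolding ab wick_mono_def prod.case pconj_sum pconj_single fst_conv snd_conv S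
  proof (rule sum.cong[OF refl])
    fix M assume M: "M \<in> {M \<in> midx n. (\<forall>i. M i \<le> L1 i) \<and> (\<forall>i. M i \<le> K2 i)}"
    have "(\<lambda>i. L1 i - M i + L2 i) = (\<lambda>i. L2 i + L1 i - M i)"
      and "(\<lambda>i. K1 i + K2 i - M i) = (\<lambda>i. K2 i - M i + K1 i)"
      using M by (auto simp: fun_eq_iff)
    then show "Poly_Mapping.single (\<lambda>i. L1 i - M i + L2 i, \<lambda>i. K1 i + K2 i - M i)
        (cnj (c * complex_of_real (h ^ msize n M) / of_nat (mfact n M) * dfact n L1 M * dfact n K2 M)) =
      Poly_Mapping.single (\<lambda>i. L2 i + L1 i - M i, \<lambda>i. K2 i - M i + K1 i)
        (cnj c * complex_of_real (h ^ msize n M) / of_nat (mfact n M) * dfact n K2 M * dfact n L1 M)"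
      by (simp add: mult_ac)
  qed
qed

lemma pconj_wick: "pconj (wick n h f g) = wick n h (pconj g) (pconj f)"
proof -
  have "pconj (wick n h f g) = (\<Sum>a\<in>Poly_Mapping.keys f. \<Sum>b\<in>Poly_Mapping.keys g.
      wick_mono n h (cnj (Poly_Mapping.lookup f a) * cnj (Poly_Mapping.lookup g b)) (snd b, fst b) (snd a, fst a))"
    unfolding wick_def pconj_sum pconj_wick_mono by simp
  also have "\<dots> = wick n h (pconj g) (pconj f)"
    unfolding pconj_eq_sum[of g] pconj_eq_sum[of f] wick_sum_left wick_sum_right wick_single_single
    by (simp add: mult.commute sum.swap[of _ "Poly_Mapping.keys g"])
  finally show ?thesis .
qed

section \<open>Evaluation on the sphere\<close>

definition mono_val :: "nat \<Rightarrow> mono \<Rightarrow> (nat \<Rightarrow> complex) \<Rightarrow> complex" where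
  "mono_val n x w = (\<Prod>i\<le>n. w i ^ fst x i * cnj (w i) ^ snd x i)"

definition eval_weighted :: "nat \<Rightarrow> (nat \<Rightarrow> real) \<Rightarrow> cpoly \<Rightarrow> (nat \<Rightarrow> complex) \<Rightarrow> complex" where
  "eval_weighted n r f w = lin_ext (\<lambda>x c. complex_of_real (r (msize n (fst x))) * c * mono_val n x w) f"

definition sphere_point :: "nat \<Rightarrow> (nat \<Rightarrow> complex) set \<Rightarrow> nat \<Rightarrow> complex" where
  "sphere_point n p = (SOME w. w \<in> p \<and> Jval n w = 1)"

definition psi_weight :: "real \<Rightarrow> nat \<Rightarrow> real" where
  "psi_weight h k = h ^ k * ffact (1 / h) k"

definition coeff_scale :: "(mono \<Rightarrow> complex) \<Rightarrow> cpoly \<Rightarrow> cpoly" where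
  "coeff_scale g f = Poly_Mapping.mapp (\<lambda>x c. g x * c) f"

lemma eval_weighted_add: "eval_weighted n r (f + g) w = eval_weighted n r f w + eval_weighted n r g w"
  unfolding eval_weighted_def by (rule lin_ext_add) (auto simp: algebra_simps)

lemma eval_weighted_sum: "eval_weighted n r (\<Sum>i\<in>I. f i) w = (\<Sum>i\<in>I. eval_weighted n r (f i) w)"
  unfolding eval_weighted_def by (rule lin_ext_sum) (auto simp: algebra_simps)

lemma eval_weighted_single:
  "eval_weighted n r (Poly_Mapping.single x c) w = complex_of_real (r (msize n (fst x))) * c * mono_val n x w"
  unfolding eval_weighted_def by (rule lin_ext_single) simp

lemma Psi0_eq: "Psi0 n f p = (if p \<in> CP n then eval_weighted n (\<lambda>_. 1) f (sphere_point n p) else 0)"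
  by (simp add: Psi0_def sphere_point_def eval_def eval_weighted_def lin_ext_def mono_val_def split_def)

lemma Psi_eq: "Psi n h f p = (if p \<in> CP n then eval_weighted n (psi_weight h) f (sphere_point n p) else 0)"
proof (cases "p \<in> CP n")
  case True
  let ?S = "Poly_Mapping.keys f"
  let ?deg = "\<lambda>x. msize n (fst x)"
  let ?t = "\<lambda>x. complex_of_real (psi_weight h (?deg x)) * Poly_Mapping.lookup f x * mono_val n x (sphere_point n p)"
  have "hcomp n k f = (\<Sum>x\<in>{x\<in>?S. ?deg x = k}. Poly_Mapping.single x (Poly_Mapping.lookup f x))" for k
    by (simp add: hcomp_def split_def)
  then have "Psi n h f p = (\<Sum>k\<in>?deg ` ?S. (\<Sum>x\<in>{x\<in>?S. ?deg x = k}. ?t x))"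
    using True by (simp add: Psi_def Psi0_eq split_def psi_weight_def eval_weighted_sum eval_weighted_single
        sum_distrib_left mult.assoc)
  also have "\<dots> = (\<Sum>x\<in>?S. ?t x)"
    by (rule sum.group) auto
  finally show ?thesis
    using True by (simp add: eval_weighted_def lin_ext_def)
qed (simp add: Psi_def Psi0_def)

lemma lookup_coeff_scale: "Poly_Mapping.lookup (coeff_scale g f) x = g x * Poly_Mapping.lookup f x"
  by (auto simp: coeff_scale_def lookup_mapp when_def in_keys_iff)

lemma keys_coeff_scale: "Poly_Mapping.keys (coeff_scale g f) \<subseteq> Poly_Mapping.keys f"
  unfolding coeff_scale_def by (rule keys_mapp_subset)

lemma Pkk_coeff_scale: "f \<in> Pkk n \<Longrightarrow> coeff_scale g f \<in> Pkk n"
  using keys_coeff_scale by (auto simp: Pkk_iff)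

lemma coeff_scale_coeff_scale: "coeff_scale g (coeff_scale g' f) = coeff_scale (\<lambda>x. g x * g' x) f"
  by (rule poly_mapping_eqI) (simp add: lookup_coeff_scale)

lemma coeff_scale_one: "coeff_scale (\<lambda>_. 1) f = f"
  by (rule poly_mapping_eqI) (simp add: lookup_coeff_scale)

lemma eval_weighted_coeff_scale:
  "eval_weighted n r (coeff_scale g f) w
     = lin_ext (\<lambda>x c. complex_of_real (r (msize n (fst x))) * (g x * c) * mono_val n x w) f"
  unfolding eval_weighted_def
  by (subst (1 2) lin_ext_superset[where S="Poly_Mapping.keys f"]) (auto simp: keys_coeff_scale lookup_coeff_scale)

lemma Psi_eq_Psi0_coeff_scale:
  "Psi n h f = Psi0 n (coeff_scale (\<lambda>x. complex_of_real (psi_weight h (msize n (fst x)))) f)"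
  by (rule ext) (simp add: Psi_eq Psi0_eq eval_weighted_coeff_scale, simp add: eval_weighted_def mult_ac)

lemma nat_mult_neq_one:
  assumes "\<forall>k::nat. k \<ge> 1 \<longrightarrow> h \<noteq> 1 / real k"
  shows "real k * h \<noteq> 1"
proof
  assume "real k * h = 1"
  then have "k \<ge> 1" "h = 1 / real k" by (cases k; auto simp: field_simps)+
  with assms show False by auto
qed

lemma psi_weight_Suc: "h \<noteq> 0 \<Longrightarrow> psi_weight h (Suc k) = psi_weight h k * (1 - real k * h)"
  by (simp add: psi_weight_def ffact_def field_simps)

lemma psi_weight_nonzero:
  assumes "h \<noteq> 0" "\<forall>k::nat. k \<ge> 1 \<longrightarrow> h \<noteq> 1 / real k"
  shows "psi_weight h k \<noteq> 0"
proof (induction k)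
  case 0
  show ?case by (simp add: psi_weight_def ffact_def)
next
  case (Suc k)
  then show ?case by (simp add: psi_weight_Suc[OF assms(1)] nat_mult_neq_one[OF assms(2)])
qed

lemma Psi_image_eq_Psi0_image:
  assumes "h \<noteq> 0" "\<forall>k::nat. k \<ge> 1 \<longrightarrow> h \<noteq> 1 / real k"
  shows "Psi n h ` Pkk n = Psi0 n ` Pkk n"
proof
  show "Psi n h ` Pkk n \<subseteq> Psi0 n ` Pkk n"
    by (auto simp: Psi_eq_Psi0_coeff_scale intro: Pkk_coeff_scale)
  let ?w = "\<lambda>x. complex_of_real (psi_weight h (msize n (fst x)))"
  have "Psi0 n f = Psi n h (coeff_scale (\<lambda>x. 1 / ?w x) f)" for f
    using psi_weight_nonzero[OF assms]
    by (simp add: Psi_eq_Psi0_coeff_scale coeff_scale_coeff_scale coeff_scale_one)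
  then show "Psi0 n ` Pkk n \<subseteq> Psi n h ` Pkk n"
    by (auto intro: Pkk_coeff_scale)
qed

lemma mono_val_swap: "mono_val n (snd x, fst x) w = cnj (mono_val n x w)"
  by (simp add: mono_val_def mult.commute)

lemma eval_weighted_pconj:
  assumes "f \<in> Pkk n"
  shows "eval_weighted n r (pconj f) w = cnj (eval_weighted n r f w)"
proof -
  have "eval_weighted n r (pconj f) w = (\<Sum>x\<in>Poly_Mapping.keys f.
      complex_of_real (r (msize n (snd x))) * cnj (Poly_Mapping.lookup f x) * cnj (mono_val n x w))"
    by (simp add: pconj_eq_sum eval_weighted_sum eval_weighted_single mono_val_swap)
  also have "\<dots> = (\<Sum>x\<in>Poly_Mapping.keys f.
      complex_of_real (r (msize n (fst x))) * cnj (Poly_Mapping.lookup f x) * cnj (mono_val n x w))"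
    using assms by (intro sum.cong) (auto simp: Pkk_iff balanced_def)
  also have "\<dots> = cnj (eval_weighted n r f w)"
    by (simp add: eval_weighted_def lin_ext_def)
  finally show ?thesis .
qed

lemma Psi_pconj: "f \<in> Pkk n \<Longrightarrow> Psi n h (pconj f) p = cnj (Psi n h f p)"
  by (simp add: Psi_eq eval_weighted_pconj)

lemma Jval_scale: "Jval n (\<lambda>i. c * w i) = (cmod c)\<^sup>2 * Jval n w"
  by (simp add: Jval_def norm_mult power_mult_distrib sum_distrib_left)

lemma Jval_pos:
  assumes "w \<in> Cvec n" "w \<noteq> (\<lambda>_. 0)"
  shows "Jval n w > 0"
proof -
  obtain i where i: "w i \<noteq> 0" using assms(2) by auto
  then have "i \<le> n" using assms(1) by (auto simp: Cvec_def not_le intro: ccontr)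
  then have "(cmod (w i))\<^sup>2 \<le> Jval n w"
    unfolding Jval_def by (intro member_le_sum) auto
  moreover have "(cmod (w i))\<^sup>2 > 0" using i by simp
  ultimately show ?thesis by linarith
qed

lemma sphere_point_cline:
  assumes "w \<in> Cvec n" "w \<noteq> (\<lambda>_. 0)"
  shows "sphere_point n (cline w) \<in> cline w" "Jval n (sphere_point n (cline w)) = 1"
proof -
  define c where "c = complex_of_real (1 / sqrt (Jval n w))"
  have J: "Jval n w > 0" using Jval_pos[OF assms] .
  then have "c \<noteq> 0" "cmod c = 1 / sqrt (Jval n w)"
    unfolding c_def norm_of_real by simp_all
  then have "(\<lambda>i. c * w i) \<in> cline w \<and> Jval n (\<lambda>i. c * w i) = 1"
    using J by (auto simp: cline_def Jval_scale power_divide)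
  then have "sphere_point n (cline w) \<in> cline w \<and> Jval n (sphere_point n (cline w)) = 1"
    unfolding sphere_point_def by (rule someI[where P="\<lambda>v. v \<in> cline w \<and> Jval n v = 1"])
  then show "sphere_point n (cline w) \<in> cline w" "Jval n (sphere_point n (cline w)) = 1"
    by auto
qed

lemma Jval_sphere_point: "p \<in> CP n \<Longrightarrow> Jval n (sphere_point n p) = 1"
  by (auto simp: CP_def sphere_point_cline)

lemma mono_val_mul_zz: "j \<le> n \<Longrightarrow> mono_val n (mul_zz j x) w = mono_val n x w * (w j * cnj (w j))"
proof -
  assume j: "j \<le> n"
  have "mono_val n (mul_zz j x) w = mono_val n x w * (\<Prod>i\<le>n. w i ^ unit_idx j i * cnj (w i) ^ unit_idx j i)"
    by (simp add: mono_val_def mul_zz_def power_add prod.distrib[symmetric] algebra_simps)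
  also have "(\<Prod>i\<le>n. w i ^ unit_idx j i * cnj (w i) ^ unit_idx j i) = (\<Prod>i\<le>n. if i = j then w j * cnj (w j) else 1)"
    by (rule prod.cong) (auto simp: unit_idx_def)
  also have "\<dots> = w j * cnj (w j)" using j by (rule prod_if_eq_one)
  finally show ?thesis .
qed

lemma sum_mult_cnj_eq_Jval: "(\<Sum>j\<le>n. w j * cnj (w j)) = complex_of_real (Jval n w)"
  unfolding Jval_def of_real_sum by (rule sum.cong[OF refl]) (rule complex_norm_square[symmetric])

text \<open>On the sphere the term (h |L| - 1) z^K zbar^L cancels z^K zbar^L J because
  psi_weight h (k + 1) = (1 - k h) psi_weight h k.\<close>
lemma eval_weighted_right_Jm1:
  assumes h: "h \<noteq> 0" and J: "Jval n w = 1" and x: "balanced n x"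
  shows "eval_weighted n (psi_weight h) (right_Jm1 n h x c) w = 0"
proof -
  let ?k = "msize n (fst x)"
  have "eval_weighted n (psi_weight h) (right_Jm1 n h x c) w
     = (\<Sum>j\<le>n. complex_of_real (psi_weight h (?k + 1)) * c * (mono_val n x w * (w j * cnj (w j))))
       + complex_of_real (psi_weight h ?k) * (c * (complex_of_real h * of_nat (msize n (snd x)) - 1)) * mono_val n x w"
    unfolding right_Jm1_def eval_weighted_add eval_weighted_sum eval_weighted_single
    by (intro arg_cong2[where f="(+)"] sum.cong refl) (simp_all add: msize_mul_zz mono_val_mul_zz)
  also have "\<dots> = complex_of_real (psi_weight h (?k + 1)) * c * mono_val n x w
       + complex_of_real (psi_weight h ?k) * (c * (complex_of_real h * of_nat ?k - 1)) * mono_val n x w"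
    using x J by (simp add: sum_distrib_left[symmetric] sum_mult_cnj_eq_Jval balanced_def)
  also have "\<dots> = 0"
    using h by (simp add: psi_weight_Suc algebra_simps)
  finally show ?thesis .
qed

lemma Psi_wick_Jm1:
  assumes "h \<noteq> 0" "b \<in> Pkk n"
  shows "Psi n h (wick n h b (Jpoly n - onep)) = (\<lambda>_. 0)"
  using assms
  by (auto simp: fun_eq_iff Psi_eq wick_Jm1 lin_ext_def eval_weighted_sum Pkk_iff
      Jval_sphere_point eval_weighted_right_Jm1)

section \<open>Associativity against J - 1\<close>

lemma ffact_0 [simp]: "ffact x 0 = 1"
  by (simp add: ffact_def)

lemma ffact_Suc: "ffact x (Suc m) = ffact x m * (x - real m)"
  by (simp add: ffact_def)

lemma ffact_Suc_shift: "ffact (x + 1) (Suc m) = (x + 1) * ffact x m"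
  by (induction m) (simp_all add: ffact_Suc algebra_simps)

lemma ffact_plus_one: "ffact (x + 1) m = ffact x m + (if 1 \<le> m then real m * ffact x (m - 1) else 0)"
proof (cases m)
  case (Suc k)
  show ?thesis unfolding Suc ffact_Suc_shift ffact_Suc[of x] by (simp add: algebra_simps)
qed simp

lemma ffact_of_nat_eq_zero: "k < m \<Longrightarrow> ffact (real k) m = 0"
  unfolding ffact_def by (rule prod_zero) auto

lemma ffact_of_nat: "m \<le> k \<Longrightarrow> ffact (real k) m = fact k / fact (k - m)"
proof (induction m)
  case (Suc m)
  then have "(fact (k - m) :: real) = real (k - m) * fact (k - Suc m)"
    by (metis Suc_diff_Suc Suc_le_lessD fact_Suc)
  with Suc show ?case by (simp add: ffact_Suc of_nat_diff field_simps)
qed simp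

text \<open>Unlike dfact, the falling factorial L^(M) vanishes by itself when M exceeds L, so the
  constraint M <= K in the Wick sum can be dropped.\<close>
definition ffact_idx :: "nat \<Rightarrow> (nat \<Rightarrow> nat) \<Rightarrow> (nat \<Rightarrow> nat) \<Rightarrow> real" where
  "ffact_idx n L M = (\<Prod>i\<le>n. ffact (real (L i)) (M i))"

definition idx_below :: "nat \<Rightarrow> (nat \<Rightarrow> nat) \<Rightarrow> (nat \<Rightarrow> nat) set" where
  "idx_below n L = {M \<in> midx n. \<forall>i. M i \<le> L i}"

definition wick_coeff :: "nat \<Rightarrow> real \<Rightarrow> (nat \<Rightarrow> nat) \<Rightarrow> (nat \<Rightarrow> nat) \<Rightarrow> (nat \<Rightarrow> nat) \<Rightarrow> complex" where
  "wick_coeff n h L K M = complex_of_real (h ^ msize n M / real (mfact n M) * ffact_idx n L M * ffact_idx n K M)"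

definition wick_key :: "mono \<Rightarrow> mono \<Rightarrow> (nat \<Rightarrow> nat) \<Rightarrow> mono" where
  "wick_key a b M = ((\<lambda>i. fst a i + fst b i - M i), (\<lambda>i. snd a i - M i + snd b i))"

lemma dfact_eq_ffact_idx: "(\<forall>i. M i \<le> L i) \<Longrightarrow> dfact n L M = complex_of_real (ffact_idx n L M)"
  by (simp add: dfact_def ffact_idx_def ffact_of_nat)

lemma ffact_idx_eq_zero:
  assumes "M \<in> midx n" "\<not> (\<forall>i. M i \<le> K i)"
  shows "ffact_idx n K M = 0"
proof -
  obtain i where i: "K i < M i" using assms(2) by (auto simp: not_le)
  then have "i \<le> n" using assms(1) by (auto simp: midx_def not_le intro: ccontr)
  then show ?thesis
    unfolding ffact_idx_def using i by (intro prod_zero) (auto intro!: bexI[of _ i] ffact_of_nat_eq_zero)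
qed

lemma finite_idx_below: "finite (idx_below n L)"
proof (rule finite_subset)
  show "idx_below n L \<subseteq> {M. \<forall>i. (i \<in> {..n} \<longrightarrow> M i \<in> {..msize n L}) \<and> (i \<notin> {..n} \<longrightarrow> M i = 0)}"
  proof (intro subsetI CollectI allI conjI impI)
    fix M i assume M: "M \<in> idx_below n L"
    show "M i \<in> {..msize n L}" if "i \<in> {..n}"
      using M that member_le_sum[of i "{..n}" L] by (auto simp: idx_below_def msize_def intro: le_trans)
    show "M i = 0" if "i \<notin> {..n}"
      using M that by (auto simp: idx_below_def midx_def)
  qed
  show "finite \<dots>" by (rule finite_set_of_finite_funs) auto
qed

lemma wick_mono_eq:
  "wick_mono n h c a b
     = (\<Sum>M\<in>idx_below n (snd a). Poly_Mapping.single (wick_key a b M) (c * wick_coeff n h (snd a) (fst b) M))"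
proof -
  obtain K1 L1 K2 L2 where ab: "a = (K1, L1)" "b = (K2, L2)" by force
  let ?D = "{M \<in> midx n. (\<forall>i. M i \<le> L1 i) \<and> (\<forall>i. M i \<le> K2 i)}"
  have "wick_mono n h c a b = (\<Sum>M\<in>?D. Poly_Mapping.single (wick_key a b M) (c * wick_coeff n h L1 K2 M))"
    unfolding wick_mono_def ab prod.case
    by (rule sum.cong) (auto simp: dfact_eq_ffact_idx wick_key_def wick_coeff_def mult.assoc)
  also have "\<dots> = (\<Sum>M\<in>idx_below n L1. Poly_Mapping.single (wick_key a b M) (c * wick_coeff n h L1 K2 M))"
  proof (rule sum.mono_neutral_left[OF finite_idx_below])
    show "?D \<subseteq> idx_below n L1" by (auto simp: idx_below_def)
    show "\<forall>M\<in>idx_below n L1 - ?D. Poly_Mapping.single (wick_key a b M) (c * wick_coeff n h L1 K2 M) = 0"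
    proof
      fix M assume "M \<in> idx_below n L1 - ?D"
      then have "ffact_idx n K2 M = 0" by (intro ffact_idx_eq_zero) (auto simp: idx_below_def)
      then show "Poly_Mapping.single (wick_key a b M) (c * wick_coeff n h L1 K2 M) = 0"
        by (simp add: wick_coeff_def)
    qed
  qed
  finally show ?thesis by (simp add: ab)
qed

lemma prod_atMost_split:
  assumes "j \<le> (n::nat)" "\<And>i. i \<noteq> j \<Longrightarrow> f i = g i"
  shows "(\<Prod>i\<le>n. f i) = f j * (\<Prod>i\<in>{..n} - {j}. g i)"
  using assms by (subst prod.remove[of _ j]) (auto intro!: prod.cong)

lemma ffact_idx_add_unit_left:
  assumes "j \<le> n"
  shows "ffact_idx n (\<lambda>i. K i + unit_idx j i) M
    = ffact_idx n K M + (if 1 \<le> M j then real (M j) * ffact_idx n K (\<lambda>i. M i - unit_idx j i) else 0)"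
proof -
  let ?R = "\<Prod>i\<in>{..n} - {j}. ffact (real (K i)) (M i)"
  have "ffact_idx n (\<lambda>i. K i + unit_idx j i) M = ffact (real (K j + unit_idx j j)) (M j) * ?R"
    "ffact_idx n K M = ffact (real (K j)) (M j) * ?R"
    "ffact_idx n K (\<lambda>i. M i - unit_idx j i) = ffact (real (K j)) (M j - unit_idx j j) * ?R"
    unfolding ffact_idx_def by (rule prod_atMost_split[OF assms], simp add: unit_idx_def)+
  then show ?thesis using ffact_plus_one[of "real (K j)" "M j"] by (simp add: unit_idx_def algebra_simps)
qed

lemma ffact_idx_add_unit_right:
  assumes "j \<le> n"
  shows "ffact_idx n L (\<lambda>i. M i + unit_idx j i) = ffact_idx n L M * (real (L j) - real (M j))"
proof -
  let ?R = "\<Prod>i\<in>{..n} - {j}. ffact (real (L i)) (M i)"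
  have "ffact_idx n L (\<lambda>i. M i + unit_idx j i) = ffact (real (L j)) (M j + unit_idx j j) * ?R"
    "ffact_idx n L M = ffact (real (L j)) (M j) * ?R"
    unfolding ffact_idx_def by (rule prod_atMost_split[OF assms], simp add: unit_idx_def)+
  then show ?thesis by (simp add: unit_idx_def ffact_Suc algebra_simps)
qed

lemma mfact_add_unit_idx:
  assumes "j \<le> n"
  shows "mfact n (\<lambda>i. M i + unit_idx j i) = mfact n M * (M j + 1)"
proof -
  let ?R = "\<Prod>i\<in>{..n} - {j}. fact (M i) :: nat"
  have "mfact n (\<lambda>i. M i + unit_idx j i) = fact (M j + unit_idx j j) * ?R" "mfact n M = fact (M j) * ?R"
    unfolding mfact_def by (rule prod_atMost_split[OF assms], simp add: unit_idx_def)+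
  then show ?thesis by (simp add: unit_idx_def algebra_simps)
qed

text \<open>Leibniz rule: differentiating z^(K + e_j) either hits z^K or the extra factor z_j.\<close>
lemma wick_coeff_pascal:
  assumes j: "j \<le> n"
  shows "wick_coeff n h L (\<lambda>i. K i + unit_idx j i) M = wick_coeff n h L K M
    + (if 1 \<le> M j then wick_coeff n h L K (\<lambda>i. M i - unit_idx j i) * complex_of_real h
          * (of_nat (L j) - of_nat (M j - 1)) else 0)"
proof (cases "1 \<le> M j")
  case True
  define M' where "M' = (\<lambda>i. M i - unit_idx j i)"
  have M_eq: "M = (\<lambda>i. M' i + unit_idx j i)"
    using True by (auto simp: M'_def unit_idx_def fun_eq_iff)
  have msize: "msize n M = msize n M' + 1"
    unfolding M_eq using j by (rule msize_add_unit_idx)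
  have mfact: "mfact n M = mfact n M' * (M' j + 1)"
    unfolding M_eq using j by (rule mfact_add_unit_idx)
  have ffact: "ffact_idx n L M = ffact_idx n L M' * (real (L j) - real (M' j))"
    unfolding M_eq using j by (rule ffact_idx_add_unit_right)
  have Mj: "M j = M' j + 1"
    unfolding M_eq by (simp add: unit_idx_def)
  have cancel: "x ^ (m + 1) / (F * q) * (X * D) * (q * Y) = x ^ m / F * X * Y * (x * D)"
    if "q \<noteq> 0" for x F q X Y D :: real and m
    using that by (cases "F = 0") (simp_all add: field_simps)
  have "wick_coeff n h L (\<lambda>i. K i + unit_idx j i) M = wick_coeff n h L K M
      + complex_of_real (h ^ msize n M / real (mfact n M) * ffact_idx n L M * (real (M j) * ffact_idx n K M'))"
    using True by (simp add: wick_coeff_def ffact_idx_add_unit_left[OF j] distrib_left M'_def)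
  also have "h ^ msize n M / real (mfact n M) * ffact_idx n L M * (real (M j) * ffact_idx n K M')
      = h ^ msize n M' / real (mfact n M') * ffact_idx n L M' * ffact_idx n K M' * (h * (real (L j) - real (M' j)))"
    unfolding msize mfact ffact Mj of_nat_mult by (rule cancel) simp
  also have "wick_coeff n h L K M + complex_of_real \<dots>
      = wick_coeff n h L K M + wick_coeff n h L K M' * complex_of_real h * (of_nat (L j) - of_nat (M' j))"
    by (simp add: wick_coeff_def)
  finally show ?thesis
    using True Mj by (simp flip: M'_def)
qed (simp add: wick_coeff_def ffact_idx_add_unit_left[OF j])

lemma wick_key_mul_zz_right:
  assumes "\<forall>i. M i \<le> fst b i"
  shows "wick_key a (mul_zz j b) M = mul_zz j (wick_key a b M)"
proof -
  have "fst a i + (fst b i + unit_idx j i) - M i = fst a i + fst b i - M i + unit_idx j i" for i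
    using assms[rule_format, of i] by arith
  then show ?thesis by (simp add: wick_key_def mul_zz_def add.assoc)
qed

lemma wick_key_mul_zz_add_unit:
  assumes "\<forall>i. M i + unit_idx j i \<le> snd a i"
  shows "wick_key a (mul_zz j b) (\<lambda>i. M i + unit_idx j i) = wick_key a b M"
proof -
  have "(\<lambda>i. snd a i - (M i + unit_idx j i) + (snd b i + unit_idx j i)) = (\<lambda>i. snd a i - M i + snd b i)"
  proof
    fix i show "snd a i - (M i + unit_idx j i) + (snd b i + unit_idx j i) = snd a i - M i + snd b i"
      using assms[rule_format, of i] by arith
  qed
  then show ?thesis by (simp only: wick_key_def mul_zz_def fst_conv snd_conv) simp
qed

text \<open>The terms of the Wick product in which the extra factor z_j of the right monomial is
  differentiated are re-indexed by M - e_j.\<close>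
lemma sum_wick_terms_lowered:
  assumes j: "j \<le> n"
  shows "(\<Sum>M\<in>idx_below n (snd a). Poly_Mapping.single (wick_key a (mul_zz j b) M)
      (c * (if 1 \<le> M j then wick_coeff n h (snd a) (fst b) (\<lambda>i. M i - unit_idx j i) * complex_of_real h
          * (of_nat (snd a j) - of_nat (M j - 1)) else 0)))
    = (\<Sum>M\<in>idx_below n (snd a). Poly_Mapping.single (wick_key a b M)
      (c * (wick_coeff n h (snd a) (fst b) M * complex_of_real h * (of_nat (snd a j) - of_nat (M j)))))"
    (is "?lhs = (\<Sum>M\<in>?D. ?t M)")
proof -
  let ?e = "unit_idx j"
  have "?lhs = (\<Sum>M\<in>{M\<in>?D. 1 \<le> M j}. Poly_Mapping.single (wick_key a (mul_zz j b) M)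
      (c * (wick_coeff n h (snd a) (fst b) (\<lambda>i. M i - ?e i) * complex_of_real h
          * (of_nat (snd a j) - of_nat (M j - 1)))))"
    by (rule sum.mono_neutral_cong_right) (auto simp: finite_idx_below)
  also have "\<dots> = (\<Sum>M\<in>{M\<in>?D. M j < snd a j}. ?t M)"
  proof (rule sym, rule sum.reindex_bij_witness[where j = "\<lambda>M i. M i + ?e i" and i = "\<lambda>M i. M i - ?e i"])
    fix M assume M: "M \<in> {M \<in> ?D. M j < snd a j}"
    then have "\<forall>i. M i + ?e i \<le> snd a i"
      by (auto simp: idx_below_def unit_idx_def)
    then have "wick_key a (mul_zz j b) (\<lambda>i. M i + ?e i) = wick_key a b M"
      by (rule wick_key_mul_zz_add_unit)
    then show "Poly_Mapping.single (wick_key a (mul_zz j b) (\<lambda>i. M i + ?e i))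
      (c * (wick_coeff n h (snd a) (fst b) (\<lambda>i. M i + ?e i - ?e i) * complex_of_real h
          * (of_nat (snd a j) - of_nat (M j + ?e j - 1)))) = ?t M"
      by (simp add: unit_idx_def)
    show "(\<lambda>i. M i + ?e i - ?e i) = M" by simp
    show "(\<lambda>i. M i + ?e i) \<in> {M \<in> ?D. 1 \<le> M j}"
      using M j by (auto simp: idx_below_def midx_def unit_idx_def)
  next
    fix M assume M: "M \<in> {M \<in> ?D. 1 \<le> M j}"
    then show "(\<lambda>i. M i - ?e i + ?e i) = M"
      by (auto simp: unit_idx_def fun_eq_iff)
    show "(\<lambda>i. M i - ?e i) \<in> {M \<in> ?D. M j < snd a j}"
      using M by (auto simp: idx_below_def midx_def unit_idx_def intro: le_trans dest: spec[of _ j])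
  qed
  also have "\<dots> = (\<Sum>M\<in>?D. ?t M)"
  proof (rule sum.mono_neutral_left[OF finite_idx_below])
    show "\<forall>M\<in>?D - {M \<in> ?D. M j < snd a j}. ?t M = 0"
    proof
      fix M assume "M \<in> ?D - {M \<in> ?D. M j < snd a j}"
      then have "M j = snd a j" by (auto simp: idx_below_def intro: le_antisym)
      then show "?t M = 0" by simp
    qed
  qed auto
  finally show ?thesis .
qed

lemma wick_mono_mul_zz:
  assumes j: "j \<le> n"
  shows "wick_mono n h c a (mul_zz j b)
    = (\<Sum>M\<in>idx_below n (snd a). Poly_Mapping.single (mul_zz j (wick_key a b M))
        (c * wick_coeff n h (snd a) (fst b) M))
    + (\<Sum>M\<in>idx_below n (snd a). Poly_Mapping.single (wick_key a b M)
        (c * (wick_coeff n h (snd a) (fst b) M * complex_of_real h * (of_nat (snd a j) - of_nat (M j)))))"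
proof -
  let ?D = "idx_below n (snd a)"
  let ?C = "wick_coeff n h (snd a) (fst b)"
  have "wick_mono n h c a (mul_zz j b)
      = (\<Sum>M\<in>?D. Poly_Mapping.single (wick_key a (mul_zz j b) M) (c * ?C M))
      + (\<Sum>M\<in>?D. Poly_Mapping.single (wick_key a (mul_zz j b) M)
          (c * (if 1 \<le> M j then ?C (\<lambda>i. M i - unit_idx j i) * complex_of_real h
                 * (of_nat (snd a j) - of_nat (M j - 1)) else 0)))"
    unfolding wick_mono_eq
    by (simp add: mul_zz_def wick_coeff_pascal[OF j] distrib_left single_add sum.distrib)
  also have "(\<Sum>M\<in>?D. Poly_Mapping.single (wick_key a (mul_zz j b) M) (c * ?C M))
      = (\<Sum>M\<in>?D. Poly_Mapping.single (mul_zz j (wick_key a b M)) (c * ?C M))"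
  proof (rule sum.cong[OF refl])
    fix M assume M: "M \<in> ?D"
    show "Poly_Mapping.single (wick_key a (mul_zz j b) M) (c * ?C M)
        = Poly_Mapping.single (mul_zz j (wick_key a b M)) (c * ?C M)"
    proof (cases "\<forall>i. M i \<le> fst b i")
      case True
      then show ?thesis by (simp add: wick_key_mul_zz_right)
    next
      case False
      then have "?C M = 0"
        using M by (simp add: wick_coeff_def idx_below_def ffact_idx_eq_zero)
      then show ?thesis by simp
    qed
  qed
  also note sum_wick_terms_lowered[OF j]
  finally show ?thesis .
qed

lemma sum_wick_mono_mul_zz:
  "(\<Sum>j\<le>n. wick_mono n h c a (mul_zz j b))
    = (\<Sum>M\<in>idx_below n (snd a). \<Sum>j\<le>n. Poly_Mapping.single (mul_zz j (wick_key a b M))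
        (c * wick_coeff n h (snd a) (fst b) M))
    + (\<Sum>M\<in>idx_below n (snd a). Poly_Mapping.single (wick_key a b M)
        (c * (wick_coeff n h (snd a) (fst b) M * complex_of_real h
          * (of_nat (msize n (snd a)) - of_nat (msize n M)))))"
proof -
  let ?D = "idx_below n (snd a)"
  let ?C = "wick_coeff n h (snd a) (fst b)"
  have euler: "(\<Sum>j\<le>n. Poly_Mapping.single k (c * (C * complex_of_real h * (of_nat (snd a j) - of_nat (M j)))))
    = Poly_Mapping.single k (c * (C * complex_of_real h * (of_nat (msize n (snd a)) - of_nat (msize n M))))"
    for k C M
    unfolding single_sum[symmetric] sum_distrib_left[symmetric] by (simp add: msize_def sum_subtractf)
  have "(\<Sum>j\<le>n. wick_mono n h c a (mul_zz j b))
    = (\<Sum>j\<le>n. (\<Sum>M\<in>?D. Poly_Mapping.single (mul_zz j (wick_key a b M)) (c * ?C M))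
        + (\<Sum>M\<in>?D. Poly_Mapping.single (wick_key a b M)
            (c * (?C M * complex_of_real h * (of_nat (snd a j) - of_nat (M j))))))"
    by (rule sum.cong) (simp_all add: wick_mono_mul_zz)
  also have "\<dots> = (\<Sum>M\<in>?D. \<Sum>j\<le>n. Poly_Mapping.single (mul_zz j (wick_key a b M)) (c * ?C M))
    + (\<Sum>M\<in>?D. Poly_Mapping.single (wick_key a b M)
        (c * (?C M * complex_of_real h * (of_nat (msize n (snd a)) - of_nat (msize n M)))))"
    by (simp only: sum.distrib sum.swap[where A = "{..n}"] euler)
  finally show ?thesis .
qed

lemma right_Jm1_add: "right_Jm1 n h x (c + d) = right_Jm1 n h x c + right_Jm1 n h x d"
  unfolding right_Jm1_def by (simp add: single_add sum.distrib, simp add: algebra_simps flip: single_add)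

lemma right_Jm1_zero [simp]: "right_Jm1 n h x 0 = 0"
  by (simp add: right_Jm1_def)

lemma lin_ext_right_Jm1_add:
  "lin_ext (right_Jm1 n h) (f + g) = lin_ext (right_Jm1 n h) f + lin_ext (right_Jm1 n h) g"
  by (rule lin_ext_add) (simp_all add: right_Jm1_add)

lemma lin_ext_right_Jm1_sum:
  "lin_ext (right_Jm1 n h) (\<Sum>i\<in>I. f i) = (\<Sum>i\<in>I. lin_ext (right_Jm1 n h) (f i))"
  by (rule lin_ext_sum) (simp_all add: right_Jm1_add)

lemma msize_snd_wick_key:
  assumes "M \<in> idx_below n (snd a)"
  shows "(of_nat (msize n (snd (wick_key a b M))) :: complex)
     = of_nat (msize n (snd a)) - of_nat (msize n M) + of_nat (msize n (snd b))"
proof -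
  have "(of_nat (snd a i - M i + snd b i) :: complex) = of_nat (snd a i) - of_nat (M i) + of_nat (snd b i)" for i
    using assms by (auto simp: idx_below_def of_nat_diff trans_le_add1)
  then show ?thesis
    by (simp add: msize_def wick_key_def sum.distrib sum_subtractf)
qed

text \<open>The monomial case of (a * b) * (J - 1) = a * (b * (J - 1)).\<close>
lemma right_Jm1_wick_mono:
  "lin_ext (right_Jm1 n h) (wick_mono n h e a b)
   = (\<Sum>j\<le>n. wick_mono n h e a (mul_zz j b))
     + wick_mono n h (e * (complex_of_real h * of_nat (msize n (snd b)) - 1)) a b"
proof -
  let ?D = "idx_below n (snd a)"
  let ?C = "wick_coeff n h (snd a) (fst b)"
  have "lin_ext (right_Jm1 n h) (wick_mono n h e a b) = (\<Sum>M\<in>?D. right_Jm1 n h (wick_key a b M) (e * ?C M))"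
    unfolding wick_mono_eq by (simp add: lin_ext_right_Jm1_sum lin_ext_single)
  also have "\<dots> = (\<Sum>M\<in>?D. \<Sum>j\<le>n. Poly_Mapping.single (mul_zz j (wick_key a b M)) (e * ?C M))
     + (\<Sum>M\<in>?D. Poly_Mapping.single (wick_key a b M)
          (e * (?C M * complex_of_real h * (of_nat (msize n (snd a)) - of_nat (msize n M))))
        + Poly_Mapping.single (wick_key a b M) (e * (complex_of_real h * of_nat (msize n (snd b)) - 1) * ?C M))"
    unfolding sum.distrib[symmetric]
  proof (rule sum.cong[OF refl])
    fix M assume M: "M \<in> ?D"
    show "right_Jm1 n h (wick_key a b M) (e * ?C M)
      = (\<Sum>j\<le>n. Poly_Mapping.single (mul_zz j (wick_key a b M)) (e * ?C M))
        + (Poly_Mapping.single (wick_key a b M)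
             (e * (?C M * complex_of_real h * (of_nat (msize n (snd a)) - of_nat (msize n M))))
           + Poly_Mapping.single (wick_key a b M) (e * (complex_of_real h * of_nat (msize n (snd b)) - 1) * ?C M))"
      unfolding right_Jm1_def single_add[symmetric] by (simp add: msize_snd_wick_key[OF M] algebra_simps)
  qed
  also have "\<dots> = (\<Sum>j\<le>n. wick_mono n h e a (mul_zz j b))
     + wick_mono n h (e * (complex_of_real h * of_nat (msize n (snd b)) - 1)) a b"
    unfolding sum_wick_mono_mul_zz wick_mono_eq[of n h "e * _"] sum.distrib by (simp add: add.assoc)
  finally show ?thesis .
qed

lemma wick_assoc_Jm1:
  "wick n h a (wick n h b (Jpoly n - onep)) = wick n h (wick n h a b) (Jpoly n - onep)"
proof -
  have "wick n h a (right_Jm1 n h y d) = lin_ext (\<lambda>x c. lin_ext (right_Jm1 n h) (wick_mono n h (c * d) x y)) a"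
    for y d
    by (simp add: right_Jm1_def wick_add_right wick_sum_right wick_single_right right_Jm1_wick_mono
        lin_ext_add_fun lin_ext_sum_fun mult.assoc)
  then have "wick n h a (wick n h b (Jpoly n - onep)) = (\<Sum>x\<in>Poly_Mapping.keys a. \<Sum>y\<in>Poly_Mapping.keys b.
        lin_ext (right_Jm1 n h) (wick_mono n h (Poly_Mapping.lookup a x * Poly_Mapping.lookup b y) x y))"
    unfolding wick_Jm1 by (simp add: lin_ext_def wick_sum_right sum.swap[of _ "Poly_Mapping.keys b"])
  also have "\<dots> = wick n h (wick n h a b) (Jpoly n - onep)"
    by (simp only: wick_Jm1) (simp only: wick_def lin_ext_right_Jm1_sum)
  finally show ?thesis .
qed

section \<open>Polynomials in z and zbar vanishing identically\<close>

lemma poly_coeffs_zero_if_infinite_roots: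
  fixes E :: "nat \<Rightarrow> complex"
  assumes "infinite Z" and "\<And>z. z \<in> Z \<Longrightarrow> (\<Sum>m\<le>N. E m * z ^ m) = 0"
  shows "\<forall>m\<le>N. E m = 0"
proof (rule ccontr)
  assume "\<not> (\<forall>m\<le>N. E m = 0)"
  then have "finite {z. (\<Sum>m\<le>N. E m * z ^ m) = 0}"
    by (intro polyfun_rootbound_finite) auto
  moreover have "Z \<subseteq> {z. (\<Sum>m\<le>N. E m * z ^ m) = 0}"
    using assms(2) by auto
  ultimately show False
    using assms(1) finite_subset by blast
qed

text \<open>Real scalings t u separate the total degrees of a polynomial in t and cnj t.\<close>
lemma conj_poly_total_degree_part_zero:
  fixes d :: "nat \<times> nat \<Rightarrow> complex"
  assumes P: "finite P" and zero: "\<And>t. (\<Sum>p\<in>P. d p * t ^ fst p * cnj t ^ snd p) = 0"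
  shows "(\<Sum>p\<in>{p\<in>P. fst p + snd p = m}. d p * u ^ fst p * cnj u ^ snd p) = 0"
proof -
  define N where "N = Max ((\<lambda>p. fst p + snd p) ` P)"
  have N: "fst p + snd p \<le> N" if "p \<in> P" for p
    unfolding N_def using P that by (intro Max_ge) auto
  define E where "E k = (\<Sum>p\<in>{p\<in>P. fst p + snd p = k}. d p * u ^ fst p * cnj u ^ snd p)" for k
  have "\<forall>k\<le>N. E k = 0"
  proof (rule poly_coeffs_zero_if_infinite_roots)
    show "infinite (range complex_of_real)"
      using finite_imageD inj_of_real infinite_UNIV_char_0 by blast
    fix z assume "z \<in> range complex_of_real"
    then have cz: "cnj z = z" by auto
    have "0 = (\<Sum>p\<in>P. d p * (z * u) ^ fst p * cnj (z * u) ^ snd p)"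
      by (rule zero[symmetric])
    also have "\<dots> = (\<Sum>p\<in>P. (d p * u ^ fst p * cnj u ^ snd p) * z ^ (fst p + snd p))"
      by (simp add: cz power_mult_distrib power_add mult_ac)
    also have "\<dots> = (\<Sum>k\<in>{..N}. \<Sum>p\<in>{p\<in>P. fst p + snd p = k}. (d p * u ^ fst p * cnj u ^ snd p) * z ^ (fst p + snd p))"
      by (rule sum.group[symmetric]) (use P N in auto)
    also have "\<dots> = (\<Sum>k\<le>N. E k * z ^ k)"
      by (rule sum.cong) (auto simp: E_def sum_distrib_right)
    finally show "(\<Sum>k\<le>N. E k * z ^ k) = 0" by simp
  qed
  moreover have "E m = 0" if "\<not> m \<le> N"
    using N that unfolding E_def by (intro sum.neutral) fastforce
  ultimately show ?thesis
    unfolding E_def by (cases "m \<le> N") auto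
qed

definition cayley :: "real \<Rightarrow> complex" where
  "cayley x = (1 + \<i> * complex_of_real x) / (1 - \<i> * complex_of_real x)"

lemma cayley_denom_nonzero: "1 - \<i> * complex_of_real x \<noteq> 0"
  by (simp add: complex_eq_iff)

lemma infinite_range_cayley: "infinite (range cayley)"
proof -
  have "inj cayley"
  proof
    fix x y assume "cayley x = cayley y"
    then have "(1 + \<i> * complex_of_real x) * (1 - \<i> * complex_of_real y)
        = (1 + \<i> * complex_of_real y) * (1 - \<i> * complex_of_real x)"
      using cayley_denom_nonzero[of x] cayley_denom_nonzero[of y] by (simp add: cayley_def field_simps)
    then show "x = y" by (simp add: complex_eq_iff algebra_simps)
  qed
  then show ?thesis
    using finite_imageD infinite_UNIV_char_0 by blast
qed

text \<open>For u = 1 + i x one has u^a cnj u^(m - a) = cnj u^m (cayley x)^a, so a homogeneous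
  polynomial in t and cnj t becomes an ordinary polynomial on the infinite set range cayley.\<close>
lemma homogeneous_conj_poly_coeffs_zero:
  fixes d :: "nat \<times> nat \<Rightarrow> complex"
  assumes P: "finite P" and hom: "\<And>p. p \<in> P \<Longrightarrow> fst p + snd p = m"
    and zero: "\<And>u. (\<Sum>p\<in>P. d p * u ^ fst p * cnj u ^ snd p) = 0"
    and p0: "p0 \<in> P"
  shows "d p0 = 0"
proof -
  define F where "F a = (\<Sum>p\<in>{p\<in>P. fst p = a}. d p)" for a
  have F_zero: "\<forall>a\<le>m. F a = 0"
  proof (rule poly_coeffs_zero_if_infinite_roots[OF infinite_range_cayley])
    fix z assume "z \<in> range cayley"
    then obtain x where z: "z = cayley x" by auto
    define u where "u = 1 + \<i> * complex_of_real x"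
    have cu: "cnj u \<noteq> 0" "z = u / cnj u"
      using cayley_denom_nonzero[of x] by (simp_all add: z cayley_def u_def)
    have "u ^ fst p * cnj u ^ snd p = cnj u ^ m * z ^ fst p" if "p \<in> P" for p
    proof -
      have "cnj u ^ m = cnj u ^ fst p * cnj u ^ snd p"
        using hom[OF that] by (simp flip: power_add)
      then show ?thesis
        using cu by (simp add: power_divide)
    qed
    then have "0 = cnj u ^ m * (\<Sum>p\<in>P. d p * z ^ fst p)"
      using zero[of u] by (simp add: sum_distrib_left mult_ac)
    then have "(\<Sum>p\<in>P. d p * z ^ fst p) = 0"
      using cu by simp
    moreover have "(\<Sum>p\<in>P. d p * z ^ fst p) = (\<Sum>a\<le>m. \<Sum>p\<in>{p\<in>P. fst p = a}. d p * z ^ fst p)"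
      by (rule sum.group[symmetric]) (use P hom in fastforce)+
    ultimately show "(\<Sum>a\<le>m. F a * z ^ a) = 0"
      by (simp add: F_def sum_distrib_right)
  qed
  have "{p\<in>P. fst p = fst p0} = {p0}"
  proof (intro equalityI subsetI)
    fix p assume p: "p \<in> {p\<in>P. fst p = fst p0}"
    then have "snd p = snd p0"
      using hom[of p] hom[OF p0] by simp
    with p show "p \<in> {p0}" by (simp add: prod_eq_iff)
  qed (use p0 in auto)
  then have "F (fst p0) = d p0"
    by (simp add: F_def)
  with F_zero hom[OF p0] show ?thesis
    by (metis le_add1)
qed

lemma conj_poly_coeffs_zero:
  fixes d :: "nat \<times> nat \<Rightarrow> complex"
  assumes "finite P" and "\<And>t. (\<Sum>p\<in>P. d p * t ^ fst p * cnj t ^ snd p) = 0" and "p0 \<in> P"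
  shows "d p0 = 0"
  by (rule homogeneous_conj_poly_coeffs_zero[where P = "{p\<in>P. fst p + snd p = fst p0 + snd p0}"])
     (use assms conj_poly_total_degree_part_zero in auto)

text \<open>Fixing all variables but w_m, the slices with fixed exponents at m are the
  coefficients of a polynomial in w_m and cnj w_m.\<close>
lemma conj_monomials_slice_zero:
  fixes c :: "mono \<Rightarrow> complex"
  assumes S: "finite S" and zero: "\<And>w. (\<Sum>z\<in>S. c z * (\<Prod>i<Suc m. w i ^ fst z i * cnj (w i) ^ snd z i)) = 0"
    and z0: "z0 \<in> S"
  shows "(\<Sum>z\<in>{z\<in>S. fst z m = fst z0 m \<and> snd z m = snd z0 m}. c z * (\<Prod>i<m. w i ^ fst z i * cnj (w i) ^ snd z i)) = 0"
proof -
  let ?mono = "\<lambda>z. \<Prod>i<m. w i ^ fst z i * cnj (w i) ^ snd z i"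
  let ?\<pi> = "\<lambda>z. (fst z m, snd z m)"
  have "(\<Sum>z\<in>{z\<in>S. ?\<pi> z = ?\<pi> z0}. c z * ?mono z) = 0"
  proof (rule conj_poly_coeffs_zero[where P = "?\<pi> ` S"])
    show "finite (?\<pi> ` S)" "?\<pi> z0 \<in> ?\<pi> ` S" using S z0 by simp_all
    fix t
    have "(\<Prod>i<Suc m. (w(m := t)) i ^ fst z i * cnj ((w(m := t)) i) ^ snd z i)
        = ?mono z * (t ^ fst z m * cnj t ^ snd z m)" for z
    proof -
      have "(\<Prod>i<m. (w(m := t)) i ^ fst z i * cnj ((w(m := t)) i) ^ snd z i) = ?mono z"
        by (rule prod.cong) auto
      then show ?thesis by (simp add: prod.lessThan_Suc)
    qed
    then have "0 = (\<Sum>z\<in>S. c z * ?mono z * t ^ fst (?\<pi> z) * cnj t ^ snd (?\<pi> z))"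
      using zero[of "w(m := t)"] by (simp add: mult_ac)
    also have "\<dots> = (\<Sum>p\<in>?\<pi> ` S. \<Sum>z\<in>{z\<in>S. ?\<pi> z = p}. c z * ?mono z * t ^ fst (?\<pi> z) * cnj t ^ snd (?\<pi> z))"
      by (rule sum.group[symmetric]) (use S in auto)
    also have "\<dots> = (\<Sum>p\<in>?\<pi> ` S. (\<Sum>z\<in>{z\<in>S. ?\<pi> z = p}. c z * ?mono z) * t ^ fst p * cnj t ^ snd p)"
      by (intro sum.cong refl) (auto simp: sum_distrib_right)
    finally show "(\<Sum>p\<in>?\<pi> ` S. (\<Sum>z\<in>{z\<in>S. ?\<pi> z = p}. c z * ?mono z) * t ^ fst p * cnj t ^ snd p) = 0"
      by simp
  qed
  then show ?thesis by simp
qed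

text \<open>The monomials are only required to be determined by their first m exponents, so that
  the slices of conj_monomials_slice_zero are again families of this kind.\<close>
lemma conj_monomials_independent:
  fixes c :: "mono \<Rightarrow> complex"
  assumes "finite S"
    and "\<And>z z'. z \<in> S \<Longrightarrow> z' \<in> S \<Longrightarrow> (\<forall>i<m. fst z i = fst z' i \<and> snd z i = snd z' i) \<Longrightarrow> z = z'"
    and "\<And>w. (\<Sum>z\<in>S. c z * (\<Prod>i<m. w i ^ fst z i * cnj (w i) ^ snd z i)) = 0"
    and "z0 \<in> S"
  shows "c z0 = 0"
  using assms
proof (induction m arbitrary: S z0)
  case 0
  have "z = z0" if "z \<in> S" for z
    using "0.prems"(2)[OF that "0.prems"(4)] by simp
  then have "S = {z0}"
    using "0.prems"(4) by blast
  then show ?case using "0.prems"(3)[of undefined] by simp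
next
  case (Suc m)
  show ?case
  proof (rule Suc.IH[of "{z\<in>S. fst z m = fst z0 m \<and> snd z m = snd z0 m}"])
    show "finite {z\<in>S. fst z m = fst z0 m \<and> snd z m = snd z0 m}" using Suc.prems(1) by simp
    show "z0 \<in> {z\<in>S. fst z m = fst z0 m \<and> snd z m = snd z0 m}" using Suc.prems(4) by simp
    show "(\<Sum>z\<in>{z\<in>S. fst z m = fst z0 m \<and> snd z m = snd z0 m}.
        c z * (\<Prod>i<m. w i ^ fst z i * cnj (w i) ^ snd z i)) = 0" for w
      using Suc.prems(1,3,4) by (rule conj_monomials_slice_zero)
    fix z z' assume "z \<in> {z\<in>S. fst z m = fst z0 m \<and> snd z m = snd z0 m}"
      "z' \<in> {z\<in>S. fst z m = fst z0 m \<and> snd z m = snd z0 m}"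
      "\<forall>i<m. fst z i = fst z' i \<and> snd z i = snd z' i"
    then show "z = z'"
      using Suc.prems(2)[of z z'] by (auto simp: less_Suc_eq)
  qed
qed

lemma poly_eq_zero_if_eval_zero:
  assumes keys: "\<forall>z\<in>Poly_Mapping.keys f. fst z \<in> midx n \<and> snd z \<in> midx n"
    and zero: "\<And>w. eval_weighted n (\<lambda>_. 1) f w = 0"
  shows "f = 0"
proof -
  have "Poly_Mapping.lookup f z = 0" if "z \<in> Poly_Mapping.keys f" for z
  proof (rule conj_monomials_independent[where m = "Suc n"])
    show "z \<in> Poly_Mapping.keys f" by (fact that)
    show "finite (Poly_Mapping.keys f)" by simp
    fix w
    show "(\<Sum>z\<in>Poly_Mapping.keys f. Poly_Mapping.lookup f z
        * (\<Prod>i<Suc n. w i ^ fst z i * cnj (w i) ^ snd z i)) = 0"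
      using zero[of w] by (simp add: eval_weighted_def lin_ext_def mono_val_def lessThan_Suc_atMost)
  next
    fix z z' assume z: "z \<in> Poly_Mapping.keys f" and z': "z' \<in> Poly_Mapping.keys f"
      and eq: "\<forall>i<Suc n. fst z i = fst z' i \<and> snd z i = snd z' i"
    have "fst z i = fst z' i \<and> snd z i = snd z' i" for i
    proof (cases "i \<le> n")
      case True
      with eq show ?thesis by simp
    next
      case False
      with keys z z' show ?thesis by (simp add: midx_def)
    qed
    then show "z = z'"
      by (simp add: prod_eq_iff fun_eq_iff)
  qed
  then show ?thesis
    by (metis in_keys_iff keys_eq_empty equals0I)
qed

section \<open>The kernel of Psi\<close>

lemma mono_val_scale:
  "mono_val n z (\<lambda>i. c * w i) = c ^ msize n (fst z) * cnj c ^ msize n (snd z) * mono_val n z w"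
  by (simp add: mono_val_def msize_def power_mult_distrib prod.distrib power_sum mult_ac)

lemma eval_weighted_scale:
  assumes "\<forall>z\<in>Poly_Mapping.keys f. msize n (fst z) = N \<and> msize n (snd z) = N"
  shows "eval_weighted n r f (\<lambda>i. c * w i) = (c * cnj c) ^ N * eval_weighted n r f w"
  unfolding eval_weighted_def lin_ext_def sum_distrib_left
  by (rule sum.cong[OF refl]) (use assms in \<open>simp add: mono_val_scale power_mult_distrib mult_ac\<close>)

lemma eval_weighted_restrict:
  "eval_weighted n r f w = eval_weighted n r f (\<lambda>i. if i \<le> n then w i else 0)"
  unfolding eval_weighted_def lin_ext_def mono_val_def by (intro sum.cong refl arg_cong2[where f = "(*)"] prod.cong) auto

text \<open>By bihomogeneity, vanishing on the sphere means vanishing on all of C^(n+1).\<close>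
lemma bihomogeneous_in_Psi_kernel_eq_zero:
  assumes h: "h \<noteq> 0" "\<forall>k::nat. k \<ge> 1 \<longrightarrow> h \<noteq> 1 / real k"
    and y: "y \<in> Pkk n" and hom: "\<forall>z\<in>Poly_Mapping.keys y. msize n (fst z) = N"
    and zero: "\<forall>p\<in>CP n. Psi n h y p = 0"
  shows "y = 0"
proof -
  have hom2: "\<forall>z\<in>Poly_Mapping.keys y. msize n (fst z) = N \<and> msize n (snd z) = N"
    using y hom by (auto simp: Pkk_iff balanced_def)
  have weight: "eval_weighted n (psi_weight h) y w = complex_of_real (psi_weight h N) * eval_weighted n (\<lambda>_. 1) y w" for w
    unfolding eval_weighted_def lin_ext_def sum_distrib_left by (rule sum.cong[OF refl]) (use hom in simp)
  have on_Cvec: "eval_weighted n (\<lambda>_. 1) y w = 0" if w: "w \<in> Cvec n" "w \<noteq> (\<lambda>_. 0)" for w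
  proof -
    have p: "cline w \<in> CP n" using w by (auto simp: CP_def)
    obtain c where c: "c \<noteq> 0" "sphere_point n (cline w) = (\<lambda>i. c * w i)"
      using sphere_point_cline(1)[OF w] by (auto simp: cline_def)
    have "0 = Psi n h y (cline w)" using zero p by simp
    also have "\<dots> = complex_of_real (psi_weight h N) * ((c * cnj c) ^ N * eval_weighted n (\<lambda>_. 1) y w)"
      using p by (simp add: Psi_eq weight c eval_weighted_scale[OF hom2])
    finally show ?thesis using c psi_weight_nonzero[OF h] by simp
  qed
  have "eval_weighted n (\<lambda>_. 1) y w = 0" for w
  proof -
    let ?w = "\<lambda>i. if i \<le> n then w i else 0"
    let ?e = "\<lambda>i. if i = 0 then 1 else (0::complex)"
    have "eval_weighted n (\<lambda>_. 1) y ?w = 0"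
    proof (cases "?w = (\<lambda>_. 0)")
      case True
      then have "eval_weighted n (\<lambda>_. 1) y ?w = (0 * cnj 0) ^ N * eval_weighted n (\<lambda>_. 1) y ?e"
        using eval_weighted_scale[OF hom2, of "\<lambda>_. 1" 0 ?e] by simp
      also have "\<dots> = 0"
        using on_Cvec[of ?e] by (simp add: Cvec_def fun_eq_iff)
      finally show ?thesis .
    qed (simp add: on_Cvec Cvec_def)
    then show ?thesis
      by (simp flip: eval_weighted_restrict)
  qed
  moreover have "\<forall>z\<in>Poly_Mapping.keys y. fst z \<in> midx n \<and> snd z \<in> midx n"
    using y by (auto simp: Pkk_iff balanced_def)
  ultimately show ?thesis
    using poly_eq_zero_if_eval_zero by blast
qed

definition mul_J :: "nat \<Rightarrow> cpoly \<Rightarrow> cpoly" where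
  "mul_J n y = (\<Sum>z\<in>Poly_Mapping.keys y. \<Sum>j\<le>n. Poly_Mapping.single (mul_zz j z) (Poly_Mapping.lookup y z))"

lemma Pkk_mul_J: "y \<in> Pkk n \<Longrightarrow> mul_J n y \<in> Pkk n"
  unfolding mul_J_def by (intro Pkk_sum Pkk_single balanced_mul_zz) (auto simp: Pkk_iff)

lemma degree_mul_J:
  assumes "\<forall>z\<in>Poly_Mapping.keys y. msize n (fst z) = N" and "x \<in> Poly_Mapping.keys (mul_J n y)"
  shows "msize n (fst x) = N + 1"
proof -
  from assms(2) obtain z j where "z \<in> Poly_Mapping.keys y" "j \<le> n"
    "x \<in> Poly_Mapping.keys (Poly_Mapping.single (mul_zz j z) (Poly_Mapping.lookup y z))"
    unfolding mul_J_def by (blast dest: subsetD[OF keys_sum])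
  with assms(1) show ?thesis
    by (auto simp: msize_mul_zz split: if_splits)
qed

lemma coeff_scale_sum: "coeff_scale g (\<Sum>i\<in>I. f i) = (\<Sum>i\<in>I. coeff_scale g (f i))"
  by (rule poly_mapping_eqI) (simp add: lookup_coeff_scale lookup_sum sum_distrib_left)

lemma coeff_scale_single: "coeff_scale g (Poly_Mapping.single x c) = Poly_Mapping.single x (g x * c)"
  by (rule poly_mapping_eqI) (simp add: lookup_coeff_scale lookup_single when_def)

text \<open>On P^(N,N) right multiplication by J - 1 is y |-> y J + (h N - 1) y, so y is a
  multiple of J - 1 up to a term of degree N + 1 as soon as h N \<noteq> 1.\<close>
lemma right_Jm1_bihomogeneous:
  assumes y: "y \<in> Pkk n" and hom: "\<forall>z\<in>Poly_Mapping.keys y. msize n (fst z) = N"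
    and s: "s * (complex_of_real h * of_nat N - 1) = 1"
  shows "lin_ext (right_Jm1 n h) (coeff_scale (\<lambda>_. s) y) = coeff_scale (\<lambda>_. s) (mul_J n y) + y"
proof -
  have "lin_ext (right_Jm1 n h) (coeff_scale (\<lambda>_. s) y)
      = (\<Sum>z\<in>Poly_Mapping.keys y. right_Jm1 n h z (s * Poly_Mapping.lookup y z))"
    by (subst lin_ext_superset[where S = "Poly_Mapping.keys y"]) (auto simp: keys_coeff_scale lookup_coeff_scale)
  also have "\<dots> = (\<Sum>z\<in>Poly_Mapping.keys y.
      (\<Sum>j\<le>n. Poly_Mapping.single (mul_zz j z) (s * Poly_Mapping.lookup y z)) + Poly_Mapping.single z (Poly_Mapping.lookup y z))"
  proof (rule sum.cong[OF refl])
    fix z assume "z \<in> Poly_Mapping.keys y"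
    then have "msize n (snd z) = N" using y hom by (auto simp: Pkk_iff balanced_def)
    then have "s * Poly_Mapping.lookup y z * (complex_of_real h * of_nat (msize n (snd z)) - 1) = Poly_Mapping.lookup y z"
      using s by (simp add: mult_ac)
    then show "right_Jm1 n h z (s * Poly_Mapping.lookup y z)
      = (\<Sum>j\<le>n. Poly_Mapping.single (mul_zz j z) (s * Poly_Mapping.lookup y z)) + Poly_Mapping.single z (Poly_Mapping.lookup y z)"
      by (simp only: right_Jm1_def)
  qed
  also have "\<dots> = coeff_scale (\<lambda>_. s) (mul_J n y) + y"
    using lin_ext_single_self[of y]
    by (simp add: mul_J_def coeff_scale_sum coeff_scale_single sum.distrib lin_ext_def)
  finally show ?thesis .
qed

lemma lookup_hcomp:
  "Poly_Mapping.lookup (hcomp n k f) z = (if msize n (fst z) = k then Poly_Mapping.lookup f z else 0)"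
  by (auto simp: hcomp_def split_def lookup_sum lookup_single when_def in_keys_iff)

lemma Pkk_hcomp: "f \<in> Pkk n \<Longrightarrow> hcomp n k f \<in> Pkk n"
  unfolding hcomp_def split_def by (intro Pkk_sum Pkk_single) (auto simp: Pkk_iff)

lemma degree_hcomp: "z \<in> Poly_Mapping.keys (hcomp n k f) \<Longrightarrow> msize n (fst z) = k"
  by (auto simp: in_keys_iff lookup_hcomp split: if_splits)

lemma degree_diff_hcomp:
  assumes "\<forall>z\<in>Poly_Mapping.keys x. msize n (fst z) \<le> N + 1"
  shows "\<forall>z\<in>Poly_Mapping.keys (x - hcomp n (N + 1) x). msize n (fst z) \<le> N"
proof
  fix z assume "z \<in> Poly_Mapping.keys (x - hcomp n (N + 1) x)"
  then have "Poly_Mapping.lookup x z - Poly_Mapping.lookup (hcomp n (N + 1) x) z \<noteq> 0"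
    by (simp add: in_keys_iff lookup_minus)
  then have "msize n (fst z) \<noteq> N + 1" "z \<in> Poly_Mapping.keys x"
    by (auto simp: lookup_hcomp in_keys_iff split: if_splits)
  with assms show "msize n (fst z) \<le> N" by fastforce
qed

lemma div_Jm1_bihomogeneous_remainder:
  assumes h: "\<forall>k::nat. k \<ge> 1 \<longrightarrow> h \<noteq> 1 / real k"
  shows "x \<in> Pkk n \<Longrightarrow> \<forall>z\<in>Poly_Mapping.keys x. msize n (fst z) \<le> N \<Longrightarrow>
    \<exists>b\<in>Pkk n. \<exists>y\<in>Pkk n. (\<forall>z\<in>Poly_Mapping.keys y. msize n (fst z) = N) \<and> x = wick n h b (Jpoly n - onep) + y"
proof (induction N arbitrary: x)
  case 0
  then show ?case by (intro bexI[of _ 0] bexI[of _ x]) auto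
next
  case (Suc N)
  define top where "top = hcomp n (N + 1) x"
  have top: "top \<in> Pkk n" unfolding top_def using Suc.prems(1) by (rule Pkk_hcomp)
  have "\<forall>z\<in>Poly_Mapping.keys (x - top). msize n (fst z) \<le> N"
    unfolding top_def using Suc.prems(2) by (intro degree_diff_hcomp) simp
  then obtain b' y' where b': "b' \<in> Pkk n" and y': "y' \<in> Pkk n"
    and hom': "\<forall>z\<in>Poly_Mapping.keys y'. msize n (fst z) = N"
    and x': "x - top = wick n h b' (Jpoly n - onep) + y'"
    using Suc.IH[OF Pkk_diff[OF Suc.prems(1) top]] by blast
  have "complex_of_real (real N * h - 1) \<noteq> 0"
    using nat_mult_neq_one[OF h, of N] by (simp only: of_real_eq_0_iff)
  then have "complex_of_real h * of_nat N - 1 \<noteq> 0"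
    by (simp add: mult.commute)
  define s where "s = 1 / (complex_of_real h * of_nat N - 1)"
  with \<open>complex_of_real h * of_nat N - 1 \<noteq> 0\<close> have s: "s * (complex_of_real h * of_nat N - 1) = 1"
    by simp
  let ?b = "b' + coeff_scale (\<lambda>_. s) y'"
  let ?y = "top - coeff_scale (\<lambda>_. s) (mul_J n y')"
  have "x = lin_ext (right_Jm1 n h) b' + y' + top"
    using x' by (simp add: wick_Jm1 diff_eq_eq)
  then have "x = wick n h ?b (Jpoly n - onep) + ?y"
    by (simp add: wick_Jm1 lin_ext_right_Jm1_add right_Jm1_bihomogeneous[OF y' hom' s])
  moreover have "?b \<in> Pkk n" "?y \<in> Pkk n"
    by (intro Pkk_add Pkk_diff b' y' top Pkk_coeff_scale Pkk_mul_J)+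
  moreover have "\<forall>z\<in>Poly_Mapping.keys ?y. msize n (fst z) = Suc N"
  proof
    fix z assume "z \<in> Poly_Mapping.keys ?y"
    then have "z \<in> Poly_Mapping.keys top \<or> z \<in> Poly_Mapping.keys (mul_J n y')"
      using keys_diff[of top] keys_coeff_scale[of "\<lambda>_. s" "mul_J n y'"] by blast
    then show "msize n (fst z) = Suc N"
      unfolding top_def using degree_hcomp[of z] degree_mul_J[OF hom', of z] by auto
  qed
  ultimately show ?case by blast
qed

lemma Psi_add: "Psi n h (f + g) p = Psi n h f p + Psi n h g p"
  by (simp add: Psi_eq eval_weighted_add)

lemma Psi_zero [simp]: "Psi n h 0 p = 0"
  by (simp add: Psi_eq eval_weighted_def)

lemma smul_eq_coeff_scale: "smul c f = coeff_scale (\<lambda>_. c) f"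
  by (rule poly_mapping_eqI) (simp add: smul_def lookup_coeff_scale Poly_Mapping.map.rep_eq when_def)

lemma Pkk_smul: "f \<in> Pkk n \<Longrightarrow> smul c f \<in> Pkk n"
  unfolding smul_eq_coeff_scale by (rule Pkk_coeff_scale)

lemma Psi_smul: "Psi n h (smul c f) p = c * Psi n h f p"
  by (simp add: Psi_eq smul_eq_coeff_scale eval_weighted_coeff_scale,
      simp add: eval_weighted_def lin_ext_def sum_distrib_left mult_ac)

lemma Jm1_eq_right_Jm1_onep: "Jpoly n - onep = lin_ext (right_Jm1 n h) onep"
proof -
  have "lin_ext (right_Jm1 n h) onep = right_Jm1 n h ((\<lambda>_. 0), (\<lambda>_. 0)) 1"
    unfolding onep_def by (rule lin_ext_single) simp
  then show ?thesis
    by (simp add: right_Jm1_def Jpoly_eq onep_def mul_zz_def single_uminus)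
qed

lemma Jm1_in_Pkk: "Jpoly n - onep \<in> Pkk n"
  unfolding Jm1_eq_right_Jm1_onep[of n 0] by (rule Pkk_right_Jm1[OF onep_in_Pkk])

lemma Psi_kernel_eq_right_multiples:
  assumes h: "h \<noteq> 0" "\<forall>k::nat. k \<ge> 1 \<longrightarrow> h \<noteq> 1 / real k"
  shows "{f \<in> Pkk n. Psi n h f = (\<lambda>_. 0)} = (\<lambda>b. wick n h b (Jpoly n - onep)) ` Pkk n"
proof (intro equalityI subsetI)
  fix x assume "x \<in> {f \<in> Pkk n. Psi n h f = (\<lambda>_. 0)}"
  then have x: "x \<in> Pkk n" and zero: "Psi n h x = (\<lambda>_. 0)" by auto
  obtain N where "\<forall>z\<in>Poly_Mapping.keys x. msize n (fst z) \<le> N"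
    using finite_nat_set_iff_bounded_le[of "(\<lambda>z. msize n (fst z)) ` Poly_Mapping.keys x"] by auto
  then obtain b y where b: "b \<in> Pkk n" and y: "y \<in> Pkk n"
    and hom: "\<forall>z\<in>Poly_Mapping.keys y. msize n (fst z) = N" and x_eq: "x = wick n h b (Jpoly n - onep) + y"
    using div_Jm1_bihomogeneous_remainder[OF h(2) x] by blast
  have "Psi n h y p = 0" for p
    using zero Psi_add[of n h "wick n h b (Jpoly n - onep)" y p] Psi_wick_Jm1[OF h(1) b]
    by (simp add: x_eq fun_eq_iff)
  then have "y = 0"
    using bihomogeneous_in_Psi_kernel_eq_zero[OF h y hom] by blast
  with b x_eq show "x \<in> (\<lambda>b. wick n h b (Jpoly n - onep)) ` Pkk n" by simp
qed (auto simp: Psi_wick_Jm1[OF assms(1)] Pkk_wick Jm1_in_Pkk)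

lemma star_ideal_Psi_kernel:
  assumes h: "h \<noteq> 0" "\<forall>k::nat. k \<ge> 1 \<longrightarrow> h \<noteq> 1 / real k"
  shows "star_ideal n h {f \<in> Pkk n. Psi n h f = (\<lambda>_. 0)}" (is "star_ideal n h ?K")
proof -
  have left: "wick n h a x \<in> ?K" if "a \<in> Pkk n" "x \<in> ?K" for a x
    using that wick_assoc_Jm1 Pkk_wick unfolding Psi_kernel_eq_right_multiples[OF h] by auto
  have conj: "pconj x \<in> ?K" if "x \<in> ?K" for x
    using that by (auto simp: Pkk_pconj Psi_pconj fun_eq_iff)
  have right: "wick n h x a \<in> ?K" if "a \<in> Pkk n" "x \<in> ?K" for a x
    using conj[OF left[OF Pkk_pconj conj]] that by (simp add: pconj_wick pconj_pconj)
  show ?thesis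
    unfolding star_ideal_def
    using left right conj by (auto simp: Pkk_add Psi_add Pkk_smul Psi_smul fun_eq_iff)
qed

theorem lemma6p1:
  fixes n :: nat and h :: real
  assumes "h \<noteq> 0" and "\<forall>k::nat. k \<ge> 1 \<longrightarrow> h \<noteq> 1 / real k"
  shows "Psi n h ` Pkk n = Psi0 n ` Pkk n
    \<and> {f \<in> Pkk n. Psi n h f = (\<lambda>_. 0)} = gen_star_ideal n h {Jpoly n - onep}
    \<and> (\<forall>f\<in>Pkk n. \<forall>p\<in>CP n. Psi n h (pconj f) p = cnj (Psi n h f p))"
proof (intro conjI)
  show "Psi n h ` Pkk n = Psi0 n ` Pkk n"
    using assms by (rule Psi_image_eq_Psi0_image)
  show "\<forall>f\<in>Pkk n. \<forall>p\<in>CP n. Psi n h (pconj f) p = cnj (Psi n h f p)"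
    by (simp add: Psi_pconj)
  have Jm1_in_kernel: "Jpoly n - onep \<in> {f \<in> Pkk n. Psi n h f = (\<lambda>_. 0)}"
    unfolding Psi_kernel_eq_right_multiples[OF assms] wick_Jm1
    using Jm1_eq_right_Jm1_onep onep_in_Pkk by blast
  have "(\<lambda>b. wick n h b (Jpoly n - onep)) ` Pkk n \<subseteq> I"
    if "star_ideal n h I" "Jpoly n - onep \<in> I" for I
    using that by (auto simp: star_ideal_def)
  then show "{f \<in> Pkk n. Psi n h f = (\<lambda>_. 0)} = gen_star_ideal n h {Jpoly n - onep}"
    using star_ideal_Psi_kernel[OF assms] Jm1_in_kernel
    unfolding gen_star_ideal_def Psi_kernel_eq_right_multiples[OF assms] by blast
qed

end
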